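(* Let $\varphi$ be a $w^*$-continuous positive linear map on $B(\mathcal H)$. The following are equivalent: (i) $\varphi$ is similar to a $w^*$-continuous positive linear map $\lambda$ on $B(\mathcal H)$ with $\lambda(I)=I$; (ii) there are constants $0<a\le b$ with $aI\le\frac{\varphi^0(I)+\cdots+\varphi^{k-1}(I)}{k}\le bI$ for all $k\in\mathbb N$; (iii) there are constants $0<a\le b$ and an invertible positive $P\in B(\mathcal H)$ with $aI\le\frac{\varphi^0(P)+\cdots+\varphi^{k-1}(P)}{k}\le bI$ for all $k\in\mathbb N$; (iv) there are constants $0<c\le d$ with $cI\le\varphi^k(I)\le dI$ for all $k\in\mathbb N$; (v) there are constants $0<c\le d$ and an invertible positive $R\in B(\mathcal H)$ with $cI\le\varphi^k(R)\le dI$ for all $k\in\mathbb N$; (vi) there is an invertible positive $Q\in B(\mathcal H)$ with $\varphi(Q)=Q$. Moreover, the operator $Q$ in (vi) can be chosen such that $aI\le Q\le bI$ (with $a,b$ as in (iii)).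
   Context: Two linear maps $\varphi,\lambda:B(\mathcal H)\to B(\mathcal H)$ are similar if there is an invertible $R\in B(\mathcal H)$ with $\varphi(RXR^* )=R\lambda(X)R^*$ for all $X\in B(\mathcal H)$. $\varphi^0$ is the identity map. *)

theory Defs
  imports "HOL-Analysis.Analysis" "HOL-Library.Complex_Order"
begin

text \<open>A complex Hilbert space is modelled as a real Hilbert space (real inner product
space, complete) equipped with an orthogonal complex structure J (multiplication by i).
Complex scalar multiplication and the complex inner product (linear in the second
argument) are derived from it.\<close>

class complex_hilbert = real_inner + complete_space +
  fixes cJ :: "'a \<Rightarrow> 'a"
  assumes cJ_add: "cJ (x + y) = cJ x + cJ y"
    and cJ_scaleR: "cJ (r *\<^sub>R x) = r *\<^sub>R cJ x"
    and cJ_cJ: "cJ (cJ x) = - x"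
    and cJ_inner: "inner (cJ x) (cJ y) = inner x y"

definition cscale :: "complex \<Rightarrow> 'a::complex_hilbert \<Rightarrow> 'a" where
  "cscale c x = Re c *\<^sub>R x + Im c *\<^sub>R cJ x"

definition cinner :: "'a::complex_hilbert \<Rightarrow> 'a \<Rightarrow> complex" where
  "cinner x y = Complex (inner x y) (inner (cJ x) y)"

text \<open>Bounded complex-linear operators.\<close>
definition bop :: "('a::complex_hilbert \<Rightarrow> 'a) \<Rightarrow> bool" where
  "bop T \<longleftrightarrow> bounded_linear T \<and> (\<forall>x. T (cJ x) = cJ (T x))"

definition BH :: "('a::complex_hilbert \<Rightarrow> 'a) set" where
  "BH = {T. bop T}"

definition op_id :: "'a::complex_hilbert \<Rightarrow> 'a" where
  "op_id = (\<lambda>x. x)"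

definition op_scal :: "real \<Rightarrow> 'a::complex_hilbert \<Rightarrow> 'a" where
  "op_scal a = (\<lambda>x. a *\<^sub>R x)"

definition adjoint :: "('a::complex_hilbert \<Rightarrow> 'a) \<Rightarrow> ('a \<Rightarrow> 'a)" where
  "adjoint T = (SOME S. bop S \<and> (\<forall>x y. cinner (T x) y = cinner x (S y)))"

definition op_le :: "('a::complex_hilbert \<Rightarrow> 'a) \<Rightarrow> ('a \<Rightarrow> 'a) \<Rightarrow> bool" where
  "op_le X Y \<longleftrightarrow> (\<forall>x. cinner x (X x) \<le> cinner x (Y x))"

definition positive_op :: "('a::complex_hilbert \<Rightarrow> 'a) \<Rightarrow> bool" where
  "positive_op X \<longleftrightarrow> bop X \<and> op_le (\<lambda>x. 0) X"

definition invertible_op :: "('a::complex_hilbert \<Rightarrow> 'a) \<Rightarrow> bool" where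
  "invertible_op R \<longleftrightarrow> bop R \<and> (\<exists>S. bop S \<and> S \<circ> R = id \<and> R \<circ> S = id)"

definition linear_map :: "(('a::complex_hilbert \<Rightarrow> 'a) \<Rightarrow> ('a \<Rightarrow> 'a)) \<Rightarrow> bool" where
  "linear_map \<phi> \<longleftrightarrow> (\<forall>X\<in>BH. \<phi> X \<in> BH) \<and>
     (\<forall>X\<in>BH. \<forall>Y\<in>BH. \<forall>c. \<phi> (\<lambda>x. cscale c (X x) + Y x) = (\<lambda>x. cscale c (\<phi> X x) + \<phi> Y x))"

definition positive_map :: "(('a::complex_hilbert \<Rightarrow> 'a) \<Rightarrow> ('a \<Rightarrow> 'a)) \<Rightarrow> bool" where
  "positive_map \<phi> \<longleftrightarrow> (\<forall>X\<in>BH. positive_op X \<longrightarrow> positive_op (\<phi> X))"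

text \<open>The weak* (sigma-weak) topology on B(H): the weakest topology on B(H) making all
normal functionals X \<mapsto> \<Sum>n \<langle>x_n, X y_n\<rangle> with \<Sum>\<parallel>x_n\<parallel>^2, \<Sum>\<parallel>y_n\<parallel>^2 < \<infinity> continuous.\<close>
definition sw_functional :: "(nat \<Rightarrow> 'a::complex_hilbert) \<Rightarrow> (nat \<Rightarrow> 'a) \<Rightarrow> ('a \<Rightarrow> 'a) \<Rightarrow> complex" where
  "sw_functional xs ys X = (\<Sum>n. cinner (xs n) (X (ys n)))"

definition wstar_top :: "('a::complex_hilbert \<Rightarrow> 'a) topology" where
  "wstar_top = topology_generated_by
     (insert BH {{X \<in> BH. sw_functional xs ys X \<in> U} | xs ys U.
        summable (\<lambda>n. (norm (xs n))\<^sup>2) \<and> summable (\<lambda>n. (norm (ys n))\<^sup>2) \<and> open U})"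

definition wstar_continuous :: "(('a::complex_hilbert \<Rightarrow> 'a) \<Rightarrow> ('a \<Rightarrow> 'a)) \<Rightarrow> bool" where
  "wstar_continuous \<phi> \<longleftrightarrow> continuous_map wstar_top wstar_top \<phi>"

definition wstar_pos_linear :: "(('a::complex_hilbert \<Rightarrow> 'a) \<Rightarrow> ('a \<Rightarrow> 'a)) \<Rightarrow> bool" where
  "wstar_pos_linear \<phi> \<longleftrightarrow> linear_map \<phi> \<and> positive_map \<phi> \<and> wstar_continuous \<phi>"

definition similar :: "(('a::complex_hilbert \<Rightarrow> 'a) \<Rightarrow> ('a \<Rightarrow> 'a)) \<Rightarrow> (('a \<Rightarrow> 'a) \<Rightarrow> ('a \<Rightarrow> 'a)) \<Rightarrow> bool" where
  "similar \<phi> \<mu> \<longleftrightarrow> (\<exists>R. invertible_op R \<and>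
      (\<forall>X\<in>BH. \<phi> (R \<circ> X \<circ> adjoint R) = R \<circ> \<mu> X \<circ> adjoint R))"

definition cesaro :: "(('a::complex_hilbert \<Rightarrow> 'a) \<Rightarrow> ('a \<Rightarrow> 'a)) \<Rightarrow> nat \<Rightarrow> ('a \<Rightarrow> 'a) \<Rightarrow> ('a \<Rightarrow> 'a)" where
  "cesaro \<phi> k P = (\<lambda>x. (1 / real k) *\<^sub>R (\<Sum>j<k. (\<phi> ^^ j) P x))"

end

theory Submission
  imports Defs
begin

text \<open>
  Four implications are soft. If \<phi>(R X R*) = R \<lambda>(X) R* with \<lambda>(I) = I, then R R* is an
  invertible positive fixed point of \<phi>. A fixed point Q with c I \<le> Q \<le> d I bounds its own
  orbit, positivity of \<phi> transfers two-sided bounds from the orbit of one invertible positive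
  operator to the orbit of I, and bounds on the orbit pass to the Cesaro means.

  For (iii) \<Rightarrow> (vi), the Cesaro means T_k of P are uniformly bounded, so they have a weak*
  cluster point Q, and a I \<le> Q \<le> b I. The defect \<phi>(T_k) - T_k = (\<phi>^k(P) - P) / k need not
  tend to 0, but the nonnegative numbers \<langle>u, \<phi>^k(P) u\<rangle> have bounded averages, so by
  polarization the defect tends to 0 weakly outside a set of density zero. Taking the cluster
  point along the filter of complements of such sets, weak* continuity of \<phi> gives \<phi>(Q) = Q.

  For (vi) \<Rightarrow> (i), write the invariant operator as Q = R^2 with R self-adjoint and invertible; then
  \<lambda>(X) = R^-1 \<phi>(R X R) R^-1 is a unital weak*-continuous positive map similar to \<phi>. After
  scaling, Q = I - T with norm T < 1, and its square root is I - Y for the fixed point Y of the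
  contraction Y \<mapsto> (T + Y^2) / 2. The adjoints needed throughout come from the Riesz
  representation theorem, proved by maximizing a functional over the unit ball.
\<close>

section \<open>The complex structure\<close>

lemma inner_cJ_self [simp]: "inner (cJ x) (x::'a::complex_hilbert) = 0"
  by (metis cJ_cJ cJ_inner inner_commute inner_minus_left neg_equal_zero)

lemma cJ_zero [simp]: "cJ (0::'a::complex_hilbert) = 0"
  using cJ_scaleR[of 0 "0::'a"] by simp

lemma cJ_minus: "cJ (- x) = - cJ (x::'a::complex_hilbert)"
  using cJ_scaleR[of "-1" x] by simp

lemma cJ_diff: "cJ (x - y) = cJ x - cJ (y::'a::complex_hilbert)"
  by (metis cJ_add cJ_minus diff_conv_add_uminus)

lemma inner_cJ_left: "inner (cJ x) y = - inner x (cJ (y::'a::complex_hilbert))"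
  by (metis cJ_cJ cJ_inner inner_minus_left)

lemma bounded_linear_cJ: "bounded_linear (cJ :: 'a::complex_hilbert \<Rightarrow> 'a)"
  by (rule bounded_linear_intro[where K=1])
     (auto simp: cJ_add cJ_scaleR norm_eq_sqrt_inner cJ_inner)

lemma cscale_of_real [simp]: "cscale (of_real r) x = r *\<^sub>R (x::'a::complex_hilbert)"
  by (simp add: cscale_def)

lemma cscale_ii: "cscale \<i> x = cJ (x::'a::complex_hilbert)"
  by (simp add: cscale_def)

lemma cscale_minus_one: "cscale (-1) x = - (x::'a::complex_hilbert)"
  by (simp add: cscale_def)

lemma Re_cinner [simp]: "Re (cinner x y) = inner x y"
  by (simp add: cinner_def)

lemma Im_cinner [simp]: "Im (cinner x y) = inner (cJ x) y"
  by (simp add: cinner_def)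

lemma cinner_add_right: "cinner x (y + z) = cinner x y + cinner x (z::'a::complex_hilbert)"
  by (simp add: complex_eq_iff inner_add_right)

lemma cinner_add_left: "cinner (x + y) z = cinner x z + cinner y (z::'a::complex_hilbert)"
  by (simp add: complex_eq_iff inner_add_left cJ_add)

lemma cinner_diff_right: "cinner x (y - z) = cinner x y - cinner x (z::'a::complex_hilbert)"
  by (simp add: complex_eq_iff inner_diff_right)

lemma cinner_diff_left: "cinner (x - y) z = cinner x z - cinner y (z::'a::complex_hilbert)"
  by (simp add: complex_eq_iff inner_diff_left cJ_diff)

lemma cinner_zero_right [simp]: "cinner x 0 = 0"
  by (simp add: complex_eq_iff)

lemma cinner_zero_left [simp]: "cinner 0 x = 0"
  by (simp add: complex_eq_iff)

lemma cinner_cJ_right: "cinner x (cJ y) = \<i> * cinner x (y::'a::complex_hilbert)"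
  by (simp add: complex_eq_iff cJ_inner inner_cJ_left[of x])

lemma cinner_cJ_left: "cinner (cJ x) y = - \<i> * cinner x (y::'a::complex_hilbert)"
  by (simp add: complex_eq_iff cJ_cJ)

lemma cinner_scaleR_right: "cinner x (r *\<^sub>R y) = of_real r * cinner x (y::'a::complex_hilbert)"
  by (simp add: complex_eq_iff)

lemma cinner_scaleR_left: "cinner (r *\<^sub>R x) y = of_real r * cinner x (y::'a::complex_hilbert)"
  by (simp add: complex_eq_iff cJ_scaleR)

lemma cinner_cscale_right: "cinner x (cscale c y) = c * cinner x (y::'a::complex_hilbert)"
  by (simp add: cscale_def cinner_add_right cinner_scaleR_right cinner_cJ_right complex_eq_iff)

lemma cinner_cscale_left: "cinner (cscale c x) y = cnj c * cinner x (y::'a::complex_hilbert)"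
  by (simp add: cscale_def cinner_add_left cinner_scaleR_left cinner_cJ_left complex_eq_iff)

lemma cinner_commute: "cinner y x = cnj (cinner x (y::'a::complex_hilbert))"
  by (simp add: complex_eq_iff inner_commute[of x "cJ y"] inner_cJ_left inner_commute[of x y])

lemma cinner_self: "cinner x x = of_real ((norm (x::'a::complex_hilbert))\<^sup>2)"
  by (simp add: complex_eq_iff power2_norm_eq_inner)

lemma cmod_cinner_self [simp]: "cmod (cinner x x) = (norm (x::'a::complex_hilbert))\<^sup>2"
  by (simp only: cinner_self norm_of_real) simp

lemma norm_cscale: "norm (cscale c x) = cmod c * norm (x::'a::complex_hilbert)"
proof -
  have "(norm (cscale c x))\<^sup>2 = inner (cscale c x) (cscale c x)"
    by (simp add: power2_norm_eq_inner)
  also have "\<dots> = ((Re c)\<^sup>2 + (Im c)\<^sup>2) * inner x x"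
    by (simp add: cscale_def inner_add_left inner_add_right cJ_inner algebra_simps power2_eq_square
        inner_commute[of x "cJ x"])
  also have "\<dots> = (cmod c * norm x)\<^sup>2"
    by (simp add: cmod_def power_mult_distrib power2_norm_eq_inner)
  finally show ?thesis
    by (rule power2_eq_imp_eq) auto
qed

lemma norm_cinner: "cmod (cinner x y) \<le> norm x * norm (y::'a::complex_hilbert)"
proof (cases "cinner x y = 0")
  case False
  define u where "u = sgn (cinner x y)"
  have "cinner (cscale u x) y = of_real (cmod (cinner x y))"
    using False unfolding u_def
    by (simp add: cinner_cscale_left sgn_div_norm complex_eq_iff complex_norm_square[symmetric]
        power2_eq_square cmod_def field_simps)
  then have "cmod (cinner x y) = inner (cscale u x) y"
    by (metis Re_cinner Re_complex_of_real)
  also have "\<dots> \<le> norm (cscale u x) * norm y"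
    by (rule Cauchy_Schwarz_ineq2[THEN order_trans[OF abs_ge_self]])
  also have "norm (cscale u x) = norm x"
    using False by (simp add: norm_cscale u_def norm_sgn)
  finally show ?thesis .
qed simp

lemma cinner_ext: "(\<And>x. cinner x y = cinner x z) \<Longrightarrow> y = (z::'a::complex_hilbert)"
  by (metis cinner_diff_right cinner_self diff_self eq_iff_diff_eq_0 of_real_eq_0_iff
        norm_eq_zero power_eq_0_iff)

lemma bounded_linear_cinner_right: "bounded_linear (\<lambda>y. cinner x (y::'a::complex_hilbert))"
  by (rule bounded_linear_intro[where K="norm x"])
     (auto simp: cinner_add_right cinner_scaleR_right scaleR_conv_of_real
       intro: norm_cinner[THEN order_trans] simp: mult.commute)

lemma bounded_linear_cinner_left: "bounded_linear (\<lambda>x. cinner x (y::'a::complex_hilbert))"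
  by (rule bounded_linear_intro[where K="norm y"])
     (auto simp: cinner_add_left cinner_scaleR_left scaleR_conv_of_real norm_cinner)

section \<open>Bounded operators\<close>

lemma bopI: "bounded_linear T \<Longrightarrow> (\<And>x. T (cJ x) = cJ (T x)) \<Longrightarrow> bop T"
  by (simp add: bop_def)

lemma bop_bounded_linear: "bop T \<Longrightarrow> bounded_linear T"
  by (simp add: bop_def)

lemma bop_apply_cJ: "bop T \<Longrightarrow> T (cJ x) = cJ (T x)"
  by (simp add: bop_def)

lemma BH_iff: "X \<in> BH \<longleftrightarrow> bop X"
  by (simp add: BH_def)

lemma bop_apply_add: "bop T \<Longrightarrow> T (x + y) = T x + T y"
  using bop_bounded_linear bounded_linear.linear linear_add by blast

lemma bop_apply_diff: "bop T \<Longrightarrow> T (x - y) = T x - T y"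
  using bop_bounded_linear bounded_linear.linear linear_diff by blast

lemma bop_apply_scaleR: "bop T \<Longrightarrow> T (r *\<^sub>R x) = r *\<^sub>R T x"
  using bop_bounded_linear bounded_linear.linear linear_scale by blast

lemma bop_apply_zero: "bop T \<Longrightarrow> T 0 = 0"
  using bop_bounded_linear bounded_linear.linear linear_0 by blast

lemma bop_apply_cscale: "bop T \<Longrightarrow> T (cscale c x) = cscale c (T x)"
  by (simp add: cscale_def bop_apply_add bop_apply_scaleR bop_apply_cJ)

lemma bop_bound: "bop T \<Longrightarrow> \<exists>K>0. \<forall>x. norm (T x) \<le> norm x * K"
  using bop_bounded_linear bounded_linear.pos_bounded by blast

lemma bop_ident: "bop (\<lambda>x. x)"
  by (rule bopI) (auto intro: bounded_linear_ident)

lemma bop_id: "bop id"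
  using bop_ident by (simp add: id_def)

lemma bop_comp: "bop S \<Longrightarrow> bop T \<Longrightarrow> bop (S \<circ> T)"
  unfolding comp_def
  by (rule bopI) (auto simp: bop_apply_cJ
      intro: bounded_linear_compose[OF bop_bounded_linear bop_bounded_linear])

lemma bop_add: "bop S \<Longrightarrow> bop T \<Longrightarrow> bop (\<lambda>x. S x + T x)"
  by (rule bopI) (auto simp: bop_apply_cJ cJ_add
      intro: bounded_linear_add[OF bop_bounded_linear bop_bounded_linear])

lemma bop_diff: "bop S \<Longrightarrow> bop T \<Longrightarrow> bop (\<lambda>x. S x - T x)"
  by (rule bopI) (auto simp: bop_apply_cJ cJ_diff
      intro: bounded_linear_sub[OF bop_bounded_linear bop_bounded_linear])

lemma bop_zero: "bop (\<lambda>x. 0)"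
  by (rule bopI) (auto intro: bounded_linear_zero)

lemma bop_scaleR: "bop T \<Longrightarrow> bop (\<lambda>x. r *\<^sub>R T x)"
  by (rule bopI) (auto simp: bop_apply_cJ cJ_scaleR
      intro: bounded_linear_compose[OF bounded_linear_scaleR_right bop_bounded_linear])

lemma bop_sum: "(\<And>i. i \<in> A \<Longrightarrow> bop (T i)) \<Longrightarrow> bop (\<lambda>x. \<Sum>i\<in>A. T i x)"
  by (induction A rule: infinite_finite_induct) (auto simp: bop_zero bop_add)

lemma bop_op_scal: "bop (op_scal r)"
  unfolding op_scal_def using bop_scaleR[OF bop_ident] .

lemma op_id_eq_id: "op_id = id"
  by (simp add: op_id_def id_def)

lemma op_id_eq_op_scal: "op_id = op_scal 1"
  by (simp add: op_scal_def op_id_def)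

lemma invertible_op_id: "invertible_op op_id"
  by (auto simp: invertible_op_def op_id_eq_id bop_id intro!: exI[of _ id])

lemma invertible_op_bop: "invertible_op R \<Longrightarrow> bop R"
  by (simp add: invertible_op_def)

lemma invertible_opE:
  assumes "invertible_op R"
  obtains S where "bop S" "\<And>x. S (R x) = x" "\<And>x. R (S x) = x"
proof -
  obtain S where "bop S" "S \<circ> R = id" "R \<circ> S = id"
    using assms by (auto simp: invertible_op_def)
  then show ?thesis
    using that by (metis comp_apply id_apply)
qed

lemma invertible_opI:
  assumes "bop R" "bop S" "\<And>x. S (R x) = x" "\<And>x. R (S x) = x"
  shows "invertible_op R"
  using assms by (auto simp: invertible_op_def fun_eq_iff intro!: exI[of _ S])

lemma invertible_op_comp:
  assumes "invertible_op A" "invertible_op B"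
  shows "invertible_op (A \<circ> B)"
proof -
  obtain A' where "bop A'" "\<And>x. A' (A x) = x" "\<And>x. A (A' x) = x"
    using assms(1) by (elim invertible_opE) (rule that)
  moreover obtain B' where "bop B'" "\<And>x. B' (B x) = x" "\<And>x. B (B' x) = x"
    using assms(2) by (elim invertible_opE) (rule that)
  ultimately show ?thesis
    using assms by (intro invertible_opI[of _ "B' \<circ> A'"]) (auto simp: bop_comp invertible_op_bop)
qed

lemma invertible_op_scaleR:
  assumes "invertible_op R" "r \<noteq> 0"
  shows "invertible_op (\<lambda>x. r *\<^sub>R R x)"
proof -
  obtain S where "bop S" "\<And>x. S (R x) = x" "\<And>x. R (S x) = x"
    using assms(1) by (elim invertible_opE) (rule that)
  with assms show ?thesis
    by (intro invertible_opI[of _ "\<lambda>x. S (inverse r *\<^sub>R x)"])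
       (auto simp: invertible_op_bop bop_scaleR bop_apply_scaleR
          bop_comp[of S "\<lambda>x. inverse r *\<^sub>R x", unfolded comp_def]
             bop_scaleR[OF bop_ident])
qed

section \<open>Linear maps on B(H) and the operator order\<close>

lemma linear_map_bop: "linear_map \<phi> \<Longrightarrow> bop X \<Longrightarrow> bop (\<phi> X)"
  by (simp add: linear_map_def BH_iff)

lemma linear_map_cscale_add: "linear_map \<phi> \<Longrightarrow> bop X \<Longrightarrow> bop Y \<Longrightarrow>
   \<phi> (\<lambda>x. cscale c (X x) + Y x) = (\<lambda>x. cscale c (\<phi> X x) + \<phi> Y x)"
  by (simp add: linear_map_def BH_iff)

lemma linear_map_zero: assumes "linear_map \<phi>" shows "\<phi> (\<lambda>x. 0) = (\<lambda>x. 0)"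
  using linear_map_cscale_add[OF assms bop_zero bop_zero, of "-1"] by (simp add: cscale_minus_one)

lemma linear_map_add: "linear_map \<phi> \<Longrightarrow> bop X \<Longrightarrow> bop Y \<Longrightarrow>
   \<phi> (\<lambda>x. X x + Y x) = (\<lambda>x. \<phi> X x + \<phi> Y x)"
  using linear_map_cscale_add[of \<phi> X Y 1] by (simp add: cscale_def)

lemma linear_map_scaleR: assumes "linear_map \<phi>" "bop X"
  shows "\<phi> (\<lambda>x. r *\<^sub>R X x) = (\<lambda>x. r *\<^sub>R \<phi> X x)"
  using linear_map_cscale_add[OF assms bop_zero, of "of_real r"] linear_map_zero[OF assms(1)]
  by simp

lemma linear_map_diff: assumes "linear_map \<phi>" "bop X" "bop Y"
  shows "\<phi> (\<lambda>x. X x - Y x) = (\<lambda>x. \<phi> X x - \<phi> Y x)"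
  using linear_map_cscale_add[OF assms(1) assms(3) assms(2), of "-1"]
  by (simp add: cscale_minus_one)

lemma linear_map_sum: assumes "linear_map \<phi>" "\<And>i. i \<in> A \<Longrightarrow> bop (X i)"
  shows "\<phi> (\<lambda>x. \<Sum>i\<in>A. X i x) = (\<lambda>x. \<Sum>i\<in>A. \<phi> (X i) x)"
  using assms(2)
proof (induction A rule: infinite_finite_induct)
  case (insert a A)
  then show ?case
    by (simp add: linear_map_add[OF assms(1)] bop_sum)
qed (simp_all add: linear_map_zero[OF assms(1)])

lemma linear_map_funpow_bop: "linear_map \<phi> \<Longrightarrow> bop X \<Longrightarrow> bop ((\<phi> ^^ n) X)"
  by (induction n) (auto simp: linear_map_bop)

lemma linear_map_funpow_scaleR: assumes "linear_map \<phi>" "bop X"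
  shows "(\<phi> ^^ n) (\<lambda>x. r *\<^sub>R X x) = (\<lambda>x. r *\<^sub>R (\<phi> ^^ n) X x)"
proof (induction n)
  case (Suc n)
  then show ?case using linear_map_scaleR[OF assms(1) linear_map_funpow_bop[OF assms, of n]] by simp
qed simp

lemma op_le_iff: "op_le X Y \<longleftrightarrow>
   (\<forall>x. inner x (X x) \<le> inner x (Y x) \<and> inner (cJ x) (X x) = inner (cJ x) (Y x))"
  by (simp add: op_le_def less_eq_complex_def)

lemma positive_op_iff: "positive_op X \<longleftrightarrow> bop X \<and> (\<forall>x. 0 \<le> inner x (X x) \<and> inner (cJ x) (X x) = 0)"
  by (simp add: positive_op_def op_le_iff)

lemma op_le_trans: "op_le X Y \<Longrightarrow> op_le Y Z \<Longrightarrow> op_le X Z"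
  by (auto simp: op_le_iff intro: order_trans)

lemma op_le_iff_positive_op_diff: "bop X \<Longrightarrow> bop Y \<Longrightarrow> op_le X Y \<longleftrightarrow> positive_op (\<lambda>x. Y x - X x)"
  by (auto simp: op_le_iff positive_op_iff bop_diff inner_diff_right)

lemma inner_op_scal [simp]: "inner x (op_scal a x) = a * (norm x)\<^sup>2"
  by (simp add: op_scal_def power2_norm_eq_inner)

lemma inner_cJ_op_scal [simp]: "inner (cJ x) (op_scal a x) = 0"
  by (simp add: op_scal_def)

lemma op_le_scal_left:
  "op_le (op_scal a) X \<longleftrightarrow> (\<forall>x. a * (norm x)\<^sup>2 \<le> inner x (X x) \<and> inner (cJ x) (X x) = 0)"
  by (auto simp: op_le_iff)

lemma op_le_scal_right:
  "op_le X (op_scal a) \<longleftrightarrow> (\<forall>x. inner x (X x) \<le> a * (norm x)\<^sup>2 \<and> inner (cJ x) (X x) = 0)"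
  by (auto simp: op_le_iff)

lemma op_le_scal_mono: "a \<le> b \<Longrightarrow> op_le (op_scal a) (op_scal b)"
  by (auto simp: op_le_iff intro: mult_right_mono)

lemma positive_op_id: "positive_op op_id"
  by (simp add: positive_op_iff op_id_def bop_ident)

lemma positive_op_if_op_le_scal:
  "bop X \<Longrightarrow> 0 \<le> a \<Longrightarrow> op_le (op_scal a) X \<Longrightarrow> positive_op X"
  unfolding positive_op_iff op_le_scal_left by (meson order_trans zero_le_mult_iff zero_le_power2)

lemma positive_map_positive_op: "positive_map \<phi> \<Longrightarrow> positive_op X \<Longrightarrow> positive_op (\<phi> X)"
  by (simp add: positive_map_def BH_iff positive_op_def)

lemma positive_map_mono:
  assumes "linear_map \<phi>" "positive_map \<phi>" "bop X" "bop Y" "op_le X Y"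
  shows "op_le (\<phi> X) (\<phi> Y)"
  using assms positive_map_positive_op[of \<phi> "\<lambda>x. Y x - X x"]
  by (simp add: op_le_iff_positive_op_diff linear_map_bop linear_map_diff)

lemma positive_map_funpow_positive_op:
  "linear_map \<phi> \<Longrightarrow> positive_map \<phi> \<Longrightarrow> positive_op X \<Longrightarrow> positive_op ((\<phi> ^^ n) X)"
  by (induction n) (auto simp: positive_map_positive_op)

lemma positive_map_funpow_mono:
  "linear_map \<phi> \<Longrightarrow> positive_map \<phi> \<Longrightarrow> bop X \<Longrightarrow> bop Y \<Longrightarrow> op_le X Y
   \<Longrightarrow> op_le ((\<phi> ^^ n) X) ((\<phi> ^^ n) Y)"
proof (induction n)
  case (Suc n)
  then show ?case
    using positive_map_mono[of \<phi> "(\<phi> ^^ n) X" "(\<phi> ^^ n) Y"]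
      linear_map_funpow_bop[of \<phi> X n] linear_map_funpow_bop[of \<phi> Y n] by simp
qed simp

section \<open>Positive operators\<close>

lemma positive_op_bop: "positive_op X \<Longrightarrow> bop X"
  by (simp add: positive_op_iff)

lemma positive_op_selfadjoint:
  assumes "positive_op X"
  shows "cinner (X x) y = cinner x (X y)"
proof -
  have b: "bop X" and im: "\<And>u. Im (cinner u (X u)) = 0"
    using assms by (auto simp: positive_op_iff)
  have e1: "cinner (x + y) (X (x + y)) =
      cinner x (X x) + cinner x (X y) + cinner y (X x) + cinner y (X y)"
    by (simp add: bop_apply_add[OF b] cinner_add_left cinner_add_right)
  have e2: "cinner (x + cJ y) (X (x + cJ y)) =
      cinner x (X x) + \<i> * cinner x (X y) - \<i> * cinner y (X x) + cinner y (X y)"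
    by (simp add: bop_apply_add[OF b] bop_apply_cJ[OF b] cinner_add_left cinner_add_right
        cinner_cJ_left cinner_cJ_right algebra_simps)
  have "cinner y (X x) = cnj (cinner x (X y))"
    using im[of "x + y"] im[of "x + cJ y"] im[of x] im[of y] unfolding e1 e2
    by (simp add: complex_eq_iff)
  then show ?thesis
    by (metis cinner_commute complex_cnj_cnj)
qed

lemma quadratic_nonneg_imp_discriminant_le:
  fixes A B C :: real
  assumes "\<And>t. 0 \<le> A + 2 * B * t + C * t\<^sup>2" "0 \<le> C"
  shows "B\<^sup>2 \<le> A * C"
proof (cases "C = 0")
  case True
  show ?thesis
  proof (rule ccontr)
    assume "\<not> ?thesis"
    then have "B \<noteq> 0" using True by auto
    then have "0 \<le> A + 2 * B * (- (A + 1) / (2 * B))"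
      using assms(1)[of "- (A + 1) / (2 * B)"] True by simp
    then show False using \<open>B \<noteq> 0\<close> by (simp add: field_simps)
  qed
next
  case False
  then have C: "C > 0" using assms(2) by simp
  have "0 \<le> A + 2 * B * (- B / C) + C * (- B / C)\<^sup>2" by (rule assms(1))
  also have "\<dots> = A - B\<^sup>2 / C" using C by (simp add: field_simps power2_eq_square)
  finally show ?thesis using C by (simp add: field_simps)
qed

lemma positive_op_Cauchy_Schwarz:
  assumes "positive_op X"
  shows "(cmod (cinner x (X y)))\<^sup>2 \<le> inner x (X x) * inner y (X y)"
proof (cases "cinner x (X y) = 0")
  case True
  then show ?thesis using assms by (simp add: positive_op_iff)
next
  case False
  have b: "bop X" using assms by (rule positive_op_bop)
  define c where "c = cinner x (X y)"
  define x' where "x' = cscale (sgn c) x"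
  \<comment> \<open>rotating x makes the mixed term real\<close>
  have u1: "cnj (sgn c) * sgn c = 1"
    using False by (simp add: c_def complex_norm_square[symmetric] norm_sgn
        mult.commute[of "cnj _"] flip: complex_mult_cnj)
  have cx': "cinner x' (X y) = of_real (cmod c)"
    using False unfolding x'_def c_def
    by (simp add: cinner_cscale_left sgn_div_norm complex_eq_iff complex_norm_square[symmetric]
        power2_eq_square cmod_def field_simps)
  moreover have "cinner y (X x') = cnj (cinner x' (X y))"
    using positive_op_selfadjoint[OF assms, of y x'] cinner_commute[of "X y" x'] by simp
  ultimately have cx: "inner x' (X y) = cmod c" "inner y (X x') = cmod c"
    by (metis Re_cinner Re_complex_of_real complex_cnj_complex_of_real)+
  have xx: "inner x' (X x') = inner x (X x)"
  proof -
    have "cinner x' (X x') = (cnj (sgn c) * sgn c) * cinner x (X x)"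
      by (simp add: x'_def bop_apply_cscale[OF b] cinner_cscale_left cinner_cscale_right)
    then show ?thesis using u1 by (metis Re_cinner mult_1)
  qed
  have "0 \<le> inner x (X x) + 2 * cmod c * t + inner y (X y) * t\<^sup>2" for t
  proof -
    have "0 \<le> inner (x' + t *\<^sub>R y) (X (x' + t *\<^sub>R y))" using assms by (simp add: positive_op_iff)
    also have "\<dots> = inner x' (X x') + t * inner x' (X y) + t * inner y (X x') + t\<^sup>2 * inner y (X y)"
      by (simp add: bop_apply_add[OF b] bop_apply_scaleR[OF b] inner_add_left inner_add_right
          algebra_simps power2_eq_square)
    finally show ?thesis using xx cx by (simp add: algebra_simps)
  qed
  from quadratic_nonneg_imp_discriminant_le[OF this] show ?thesis
    using assms by (simp add: positive_op_iff c_def)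
qed

lemma positive_op_cinner_le:
  assumes "positive_op X" "op_le X (op_scal r)" "0 \<le> r"
  shows "cmod (cinner x (X y)) \<le> r * norm x * norm y"
proof -
  have "(cmod (cinner x (X y)))\<^sup>2 \<le> inner x (X x) * inner y (X y)"
    by (rule positive_op_Cauchy_Schwarz[OF assms(1)])
  also have "\<dots> \<le> (r * (norm x)\<^sup>2) * (r * (norm y)\<^sup>2)"
    using assms by (intro mult_mono) (auto simp: op_le_scal_right positive_op_iff)
  also have "\<dots> = (r * norm x * norm y)\<^sup>2" by (simp add: power_mult_distrib power2_eq_square)
  finally show ?thesis by (rule power2_le_imp_le) (use assms(3) in simp)
qed

lemma positive_op_norm_le:
  assumes "positive_op X" "op_le X (op_scal r)" "0 \<le> r"
  shows "norm (X y) \<le> r * norm y"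
proof (cases "X y = 0")
  case False
  have "(norm (X y))\<^sup>2 = cmod (cinner (X y) (X y))" by simp
  also have "\<dots> \<le> r * norm (X y) * norm y" by (rule positive_op_cinner_le[OF assms])
  finally show ?thesis using False by (simp add: power2_eq_square mult.assoc)
qed (use assms in simp)

lemma positive_op_bounded_above:
  assumes "positive_op Q"
  obtains d where "c \<le> d" "op_le Q (op_scal d)"
proof -
  obtain K where K: "K > 0" "\<And>x. norm (Q x) \<le> norm x * K"
    using bop_bound positive_op_bop[OF assms] by blast
  have "inner x (Q x) \<le> max K c * (norm x)\<^sup>2" for x
  proof -
    have "inner x (Q x) \<le> norm x * norm (Q x)" by (rule norm_cauchy_schwarz)
    also have "\<dots> \<le> norm x * (norm x * K)" by (intro mult_left_mono K(2)) auto
    also have "\<dots> = K * (norm x)\<^sup>2" by (simp add: power2_eq_square)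
    also have "\<dots> \<le> max K c * (norm x)\<^sup>2" by (intro mult_right_mono) auto
    finally show ?thesis .
  qed
  then show ?thesis
    using that[of "max K c"] assms by (auto simp: op_le_scal_right positive_op_iff)
qed

lemma invertible_positive_op_bounded_below:
  assumes "positive_op Q" "invertible_op Q" shows "\<exists>c>0. op_le (op_scal c) Q"
proof -
  obtain S where S: "bop S" "\<And>x. S (Q x) = x" "\<And>x. Q (S x) = x"
    using assms(2) by (elim invertible_opE) (rule that)
  obtain K where K: "K > 0" "\<And>x. norm (S x) \<le> norm x * K" using bop_bound S by blast
  have "(1/K) * (norm x)\<^sup>2 \<le> inner x (Q x)" for x
  proof (cases "x = 0")
    case False
    have "(cmod (cinner x (Q (S x))))\<^sup>2 \<le> inner x (Q x) * inner (S x) (Q (S x))"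
      by (rule positive_op_Cauchy_Schwarz[OF assms(1)])
    also have "inner (S x) (Q (S x)) \<le> K * (norm x)\<^sup>2"
    proof -
      have "inner (S x) (Q (S x)) \<le> norm (S x) * norm x"
        using S(3) norm_cauchy_schwarz by metis
      also have "\<dots> \<le> (norm x * K) * norm x" by (intro mult_right_mono K(2)) auto
      finally show ?thesis by (simp add: power2_eq_square algebra_simps)
    qed
    then have "inner x (Q x) * inner (S x) (Q (S x)) \<le> inner x (Q x) * (K * (norm x)\<^sup>2)"
      using assms(1) by (intro mult_left_mono) (auto simp: positive_op_iff)
    finally have "((norm x)\<^sup>2)\<^sup>2 \<le> inner x (Q x) * (K * (norm x)\<^sup>2)"
      by (simp add: S(3))
    then have "(norm x)\<^sup>2 \<le> inner x (Q x) * K"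
      using False by (simp add: power2_eq_square algebra_simps)
    then show ?thesis using K(1) by (simp add: field_simps)
  qed simp
  then show ?thesis
    using K(1) assms(1) by (intro exI[of _ "1/K"]) (auto simp: op_le_scal_left positive_op_iff)
qed

section \<open>Riesz representation and adjoints\<close>

lemma parallelogram_norm_diff_le:
  fixes u v :: "'a::real_inner"
  assumes "norm u \<le> 1" "norm v \<le> 1" "2 - \<eta> \<le> norm (u + v)" "0 \<le> \<eta>"
  shows "(norm (u - v))\<^sup>2 \<le> 4 * \<eta>"
proof (cases "\<eta> \<le> 2")
  case True
  have "(norm (u - v))\<^sup>2 = 2 * (norm u)\<^sup>2 + 2 * (norm v)\<^sup>2 - (norm (u + v))\<^sup>2"
    by (simp add: power2_norm_eq_inner inner_diff_left inner_diff_right inner_add_left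
        inner_add_right inner_commute)
  also have "\<dots> \<le> 4 - (2 - \<eta>)\<^sup>2"
  proof -
    have "(2 - \<eta>)\<^sup>2 \<le> (norm (u + v))\<^sup>2"
      using assms(3) True by (intro power_mono) auto
    moreover have "(norm u)\<^sup>2 \<le> 1" "(norm v)\<^sup>2 \<le> 1"
      using assms(1,2) by (simp_all add: power_le_one)
    ultimately show ?thesis by linarith
  qed
  also have "\<dots> \<le> 4 * \<eta>"
    by (simp add: power2_eq_square algebra_simps)
  finally show ?thesis .
next
  case False
  have "norm (u - v) \<le> 2"
    using norm_triangle_ineq4[of u v] assms(1,2) by simp
  then have "(norm (u - v))\<^sup>2 \<le> 2\<^sup>2"
    by (intro power_mono) auto
  then show ?thesis using False by simp
qed

lemma Cauchy_if_dist_le_inverse_Suc: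
  fixes X :: "nat \<Rightarrow> 'a::metric_space"
  assumes bound: "\<And>m n. (dist (X m) (X n))\<^sup>2 \<le> C * (1 / real (Suc m) + 1 / real (Suc n))"
    and "0 \<le> C"
  shows "Cauchy X"
proof (rule metric_CauchyI)
  fix e :: real assume e: "e > 0"
  obtain M :: nat where M: "2 * C / e\<^sup>2 < real M" using reals_Archimedean2 by blast
  have "dist (X m) (X n) < e" if "M \<le> m" "M \<le> n" for m n
  proof -
    have "1 / real (Suc m) \<le> 1 / real (Suc M)" "1 / real (Suc n) \<le> 1 / real (Suc M)"
      using that by (auto simp: field_simps)
    then have "1 / real (Suc m) + 1 / real (Suc n) \<le> 2 / real (Suc M)"
      by simp
    then have "(dist (X m) (X n))\<^sup>2 \<le> C * (2 / real (Suc M))"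
      using bound[of m n] mult_left_mono \<open>0 \<le> C\<close> by (meson order.trans)
    also have "\<dots> < e\<^sup>2"
      using M e by (simp add: field_simps) (smt (verit) zero_less_power)
    finally show ?thesis using e by (simp add: power2_less_imp_less)
  qed
  then show "\<exists>M. \<forall>m\<ge>M. \<forall>n\<ge>M. dist (X m) (X n) < e" by blast
qed

lemma bounded_linear_functional_near_onorm:
  fixes f :: "'a::real_normed_vector \<Rightarrow> real"
  assumes f: "bounded_linear f" and e: "0 < e"
  shows "\<exists>u. norm u \<le> 1 \<and> onorm f - e < f u"
proof (rule ccontr)
  interpret f: bounded_linear f by fact
  assume "\<nexists>u. norm u \<le> 1 \<and> onorm f - e < f u"
  then have le: "f u \<le> onorm f - e" if "norm u \<le> 1" for u
    using that by (meson not_less)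
  then have "0 \<le> onorm f - e" using le[of 0] by (simp add: f.zero)
  have "norm (f x) \<le> (onorm f - e) * norm x" for x
  proof (cases "x = 0")
    case False
    have "f (x /\<^sub>R norm x) \<le> onorm f - e" "f (- (x /\<^sub>R norm x)) \<le> onorm f - e"
      using False by (intro le; simp)+
    then show ?thesis
      using False by (simp add: f.scaleR f.neg abs_le_iff field_simps)
  qed (simp add: f.zero)
  then have "onorm f \<le> onorm f - e"
    using \<open>0 \<le> onorm f - e\<close> by (rule onorm_bound[rotated])
  then show False using e by linarith
qed

lemma bounded_linear_functional_attains_onorm:
  fixes f :: "'a::{real_inner,complete_space} \<Rightarrow> real"
  assumes f: "bounded_linear f" and nz: "f x0 \<noteq> 0"
  shows "\<exists>z. norm z = 1 \<and> f z = onorm f"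
proof -
  interpret f: bounded_linear f by fact
  define N where "N = onorm f"
  have N: "0 < N" using nz onorm_pos_lt[OF f] by (auto simp: N_def)
  have fle: "f x \<le> N * norm x" for x
    using onorm[OF f, of x] by (simp add: N_def)
  have "\<exists>u. norm u \<le> 1 \<and> N - N / real (Suc n) < f u" for n
    using bounded_linear_functional_near_onorm[OF f, of "N / real (Suc n)"] N by (simp add: N_def)
  then obtain xs where xs: "\<And>n. norm (xs n) \<le> 1" "\<And>n. N - N / real (Suc n) < f (xs n)"
    by metis
  \<comment> \<open>almost maximizing vectors are close to each other by the parallelogram law\<close>
  have "(dist (xs m) (xs n))\<^sup>2 \<le> 4 * (1 / real (Suc m) + 1 / real (Suc n))" for m n
  proof -
    have "N * (2 - (1 / real (Suc m) + 1 / real (Suc n))) < f (xs m + xs n)"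
      using xs(2)[of m] xs(2)[of n] by (simp add: f.add algebra_simps)
    also have "\<dots> \<le> N * norm (xs m + xs n)" by (rule fle)
    finally have "2 - (1 / real (Suc m) + 1 / real (Suc n)) \<le> norm (xs m + xs n)"
      using N by simp
    then show ?thesis
      unfolding dist_norm by (intro parallelogram_norm_diff_le xs(1)) auto
  qed
  then have "Cauchy xs"
    by (rule Cauchy_if_dist_le_inverse_Suc) simp
  then obtain z where z: "xs \<longlonglongrightarrow> z"
    using Cauchy_convergent_iff convergent_def by blast
  have nz1: "norm z \<le> 1" using tendsto_norm[OF z] xs(1) by (intro LIMSEQ_le_const2) auto
  have "(\<lambda>n. f (xs n)) \<longlonglongrightarrow> N"
  proof (rule real_tendsto_sandwich[of "\<lambda>n. N - N / real (Suc n)" _ _ "\<lambda>n. N"])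
    show "\<forall>\<^sub>F n in sequentially. N - N / real (Suc n) \<le> f (xs n)"
      using xs(2) less_imp_le by (intro always_eventually allI) blast
    show "\<forall>\<^sub>F n in sequentially. f (xs n) \<le> N"
      using fle[THEN order_trans] xs(1) N by (auto intro!: always_eventually mult_left_le)
    show "(\<lambda>n. N - N / real (Suc n)) \<longlonglongrightarrow> N"
      using tendsto_diff[OF tendsto_const
          tendsto_mult[OF tendsto_const LIMSEQ_inverse_real_of_nat], of N N]
      by (simp add: divide_inverse)
  qed simp
  then have fz: "f z = N"
    using f.tendsto[OF z] LIMSEQ_unique by blast
  then have "norm z = 1" using fle[of z] N nz1 by simp
  then show ?thesis using fz N_def by blast
qed

lemma riesz_representation_real:
  fixes f :: "'a::{real_inner,complete_space} \<Rightarrow> real"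
  assumes f: "bounded_linear f"
  shows "\<exists>z. \<forall>x. f x = inner z x"
proof (cases "\<forall>x. f x = 0")
  case True then show ?thesis by (intro exI[of _ 0]) simp
next
  case False
  interpret f: bounded_linear f by fact
  define N where "N = onorm f"
  obtain z where z: "norm z = 1" "f z = N"
    using False bounded_linear_functional_attains_onorm[OF f] by (auto simp: N_def)
  have zz: "inner z z = 1" using z(1) by (simp add: power2_norm_eq_inner[symmetric])
  \<comment> \<open>f attains its norm at z, so moving from z orthogonally cannot increase f to first order\<close>
  have orth: "f h = 0" if hz: "inner z h = 0" for h
  proof -
    have "0 \<le> 0 + 2 * (- f h / 2) * t + (N * (norm h)\<^sup>2) * t\<^sup>2" for t
    proof -
      have n2: "(norm (z + t *\<^sub>R h))\<^sup>2 = 1 + t\<^sup>2 * (norm h)\<^sup>2"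
        using hz zz by (simp only: power2_norm_eq_inner)
          (simp add: inner_add_left inner_add_right inner_commute[of h z] power2_eq_square
            algebra_simps)
      then have "1 \<le> norm (z + t *\<^sub>R h)"
        using power2_le_imp_le[of 1 "norm (z + t *\<^sub>R h)"] by simp
      then have "norm (z + t *\<^sub>R h) \<le> (norm (z + t *\<^sub>R h))\<^sup>2"
        using mult_left_mono[of 1 "norm (z + t *\<^sub>R h)" "norm (z + t *\<^sub>R h)"]
        by (simp add: power2_eq_square)
      then have "f (z + t *\<^sub>R h) \<le> N * (norm (z + t *\<^sub>R h))\<^sup>2"
        using onorm[OF f, of "z + t *\<^sub>R h"] onorm_pos_le[OF f]
        by (simp add: N_def) (meson abs_le_iff mult_left_mono order_trans)
      then show ?thesis using n2 z(2) by (simp add: f.add f.scaleR algebra_simps)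
    qed
    from quadratic_nonneg_imp_discriminant_le[OF this] show ?thesis
      using onorm_pos_le[OF f] by (simp add: N_def)
  qed
  show ?thesis
  proof (intro exI allI)
    fix x
    have "f (x - inner z x *\<^sub>R z) = 0"
      using zz by (intro orth) (simp add: inner_diff_right)
    then show "f x = inner (N *\<^sub>R z) x"
      using z(2) by (simp add: f.diff f.scaleR)
  qed
qed

lemma riesz_representation:
  fixes g :: "'a::complex_hilbert \<Rightarrow> complex"
  assumes add: "\<And>x x'. g (x + x') = g x + g x'" and scale: "\<And>c x. g (cscale c x) = cnj c * g x"
    and bound: "\<And>x. cmod (g x) \<le> K * norm x"
  shows "\<exists>z. \<forall>x. g x = cinner x z"
proof -
  have "bounded_linear (\<lambda>x. Re (g x))"
  proof (rule bounded_linear_intro[where K=K])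
    show "Re (g (x + x')) = Re (g x) + Re (g x')" for x x'
      by (simp add: add)
    show "Re (g (r *\<^sub>R x)) = r *\<^sub>R Re (g x)" for r x
      using scale[of "of_real r" x] by simp
    show "norm (Re (g x)) \<le> norm x * K" for x
      using abs_Re_le_cmod[of "g x"] bound[of x] by (simp add: algebra_simps)
  qed
  then obtain z where z: "\<And>x. Re (g x) = inner z x"
    using riesz_representation_real by blast
  have "Im (g x) = Re (g (cJ x))" for x
    using scale[of \<i> x] by (simp add: cscale_ii)
  then have "g x = cinner x z" for x
    using z[of x] z[of "cJ x"] by (simp add: complex_eq_iff inner_commute)
  then show ?thesis by blast
qed

lemma bounded_sesquilinear_representation:
  fixes B :: "'a::complex_hilbert \<Rightarrow> 'a \<Rightarrow> complex"
  assumes add_left: "\<And>x x' y. B (x + x') y = B x y + B x' y"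
      and scale_left: "\<And>c x y. B (cscale c x) y = cnj c * B x y"
      and add_right: "\<And>x y y'. B x (y + y') = B x y + B x y'"
      and scale_right: "\<And>c x y. B x (cscale c y) = c * B x y"
      and bound: "\<And>x y. cmod (B x y) \<le> M * norm x * norm y" and "0 \<le> M"
  shows "\<exists>Q. bop Q \<and> (\<forall>x y. B x y = cinner x (Q y))"
proof -
  have "\<exists>z. \<forall>x. B x y = cinner x z" for y
    using bound by (intro riesz_representation[where K="M * norm y"])
      (auto simp: add_left scale_left algebra_simps)
  then obtain Q where Q: "\<And>x y. B x y = cinner x (Q y)"
    by metis
  have "bounded_linear Q"
  proof (rule bounded_linear_intro[where K=M])
    show "Q (y + y') = Q y + Q y'" for y y'
      by (rule cinner_ext) (simp add: Q[symmetric] add_right cinner_add_right)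
    show "Q (r *\<^sub>R y) = r *\<^sub>R Q y" for r y
      by (rule cinner_ext) (metis Q cinner_scaleR_right cscale_of_real scale_right)
    show "norm (Q y) \<le> norm y * M" for y
    proof (cases "Q y = 0")
      case False
      have "(norm (Q y))\<^sup>2 \<le> M * norm (Q y) * norm y"
        using bound[of "Q y" y] by (simp add: Q)
      then show ?thesis using False by (simp add: power2_eq_square algebra_simps)
    qed (simp add: \<open>0 \<le> M\<close>)
  qed
  moreover have "Q (cJ y) = cJ (Q y)" for y
    by (rule cinner_ext)
       (simp add: Q[symmetric] scale_right[where c=\<i>, unfolded cscale_ii] cinner_cJ_right)
  ultimately show ?thesis using Q by (blast intro: bopI)
qed

lemma adjoint_exists:
  assumes "bop T"
  shows "\<exists>S. bop S \<and> (\<forall>x y. cinner (T x) y = cinner x (S y))"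
proof -
  obtain K where K: "K > 0" "\<And>x. norm (T x) \<le> norm x * K" using bop_bound assms by blast
  show ?thesis
  proof (rule bounded_sesquilinear_representation[of "\<lambda>x y. cinner (T x) y" K])
    show "cmod (cinner (T x) y) \<le> K * norm x * norm y" for x y
      using norm_cinner[of "T x" y] mult_right_mono[OF K(2)[of x], of "norm y"]
      by (simp add: algebra_simps)
  qed (simp_all add: K(1) less_imp_le bop_apply_add[OF assms] bop_apply_cscale[OF assms]
      cinner_add_left cinner_add_right cinner_cscale_left cinner_cscale_right)
qed

lemma adjoint_bop: "bop T \<Longrightarrow> bop (adjoint T)"
  unfolding adjoint_def using someI_ex[OF adjoint_exists] by blast

lemma cinner_adjoint_right: "bop T \<Longrightarrow> cinner (T x) y = cinner x (adjoint T y)"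
  unfolding adjoint_def using someI_ex[OF adjoint_exists] by blast

lemma cinner_adjoint_left: "bop T \<Longrightarrow> cinner (adjoint T x) y = cinner x (T y)"
  by (metis cinner_adjoint_right cinner_commute complex_cnj_cnj)

lemma adjoint_eqI:
  assumes "bop T" "\<And>x y. cinner (T x) y = cinner x (S y)"
  shows "adjoint T = S"
proof
  fix y show "adjoint T y = S y"
    by (rule cinner_ext) (simp add: cinner_adjoint_right[OF assms(1), symmetric] assms(2))
qed

lemma adjoint_id: "adjoint id = (id :: 'a::complex_hilbert \<Rightarrow> 'a)"
  by (rule adjoint_eqI) (auto simp: bop_id)

lemma adjoint_comp:
  assumes "bop A" "bop B"
  shows "adjoint (A \<circ> B) = adjoint B \<circ> adjoint A"
  by (rule adjoint_eqI) (auto simp: assms bop_comp cinner_adjoint_right)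

lemma adjoint_inverse:
  assumes "bop R" "bop S" "\<And>x. R (S x) = x"
  shows "adjoint S (adjoint R x) = x"
proof -
  have "R \<circ> S = id" using assms(3) by (simp add: fun_eq_iff)
  then have "adjoint S \<circ> adjoint R = id"
    using adjoint_comp[OF assms(1,2)] by (simp add: adjoint_id)
  then show ?thesis by (metis comp_apply id_apply)
qed

lemma invertible_op_adjoint:
  assumes "invertible_op R"
  shows "invertible_op (adjoint R)"
proof -
  obtain S where S: "bop S" "\<And>x. S (R x) = x" "\<And>x. R (S x) = x"
    using assms by (elim invertible_opE) (rule that)
  have R: "bop R" using assms by (rule invertible_op_bop)
  show ?thesis
  proof (rule invertible_opI[of _ "adjoint S"])
    show "bop (adjoint R)" "bop (adjoint S)" using R S(1) by (simp_all add: adjoint_bop)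
    show "adjoint S (adjoint R x) = x" for x by (rule adjoint_inverse[OF R S(1,3)])
    show "adjoint R (adjoint S x) = x" for x by (rule adjoint_inverse[OF S(1) R S(2)])
  qed
qed

lemma sandwich_positive_op:
  assumes "bop A" "positive_op X"
  shows "positive_op (A \<circ> X \<circ> adjoint A)"
proof -
  have "cinner x ((A \<circ> X \<circ> adjoint A) x) = cinner (adjoint A x) (X (adjoint A x))" for x
    by (simp add: cinner_adjoint_left[OF assms(1), symmetric])
  from arg_cong[OF this, of Re] arg_cong[OF this, of Im] show ?thesis
    using assms by (simp add: positive_op_iff bop_comp adjoint_bop)
qed

section \<open>Inverses and square roots\<close>

instance complex_hilbert \<subseteq> banach ..

lemma bop_funpow: "bop T \<Longrightarrow> bop (T ^^ n)"
  by (induction n) (auto simp: bop_id bop_comp)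

lemma norm_funpow_le:
  fixes Y :: "'a::real_normed_vector \<Rightarrow> 'a"
  assumes "\<And>x. norm (Y x) \<le> r * norm x" "0 \<le> r"
  shows "norm ((Y ^^ n) x) \<le> r ^ n * norm x"
proof (induction n)
  case (Suc n)
  have "norm ((Y ^^ Suc n) x) \<le> r * norm ((Y ^^ n) x)" using assms(1)[of "(Y ^^ n) x"] by simp
  also have "\<dots> \<le> r * (r ^ n * norm x)" using Suc assms(2) by (intro mult_left_mono) auto
  finally show ?case by simp
qed simp

lemma neumann_series:
  assumes Y: "bop Y" "\<And>x. norm (Y x) \<le> r * norm x" and r: "0 \<le> r" "r < 1"
  obtains N where "bop N" "\<And>x. (\<lambda>n. (Y ^^ n) x) sums N x"
proof -
  define P where "P n = Blinfun (Y ^^ n)" for n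
  have P: "blinfun_apply (P n) = Y ^^ n" for n
    unfolding P_def using bop_funpow[OF Y(1)]
    by (simp add: bop_bounded_linear bounded_linear_Blinfun_apply)
  have "norm (P n) \<le> r ^ n" for n
    using r norm_funpow_le[OF Y(2) r(1)] by (intro norm_blinfun_bound) (auto simp: P)
  then have "summable (\<lambda>n. norm (P n))"
    using r by (intro summable_comparison_test[OF _ summable_geometric[of r]]) auto
  then have "P sums suminf P"
    by (simp add: summable_norm_cancel summable_sums)
  define N where "N = blinfun_apply (suminf P)"
  have N_sums: "(\<lambda>n. (Y ^^ n) x) sums N x" for x
    using bounded_linear.sums[OF blinfun.bounded_linear_left \<open>P sums suminf P\<close>, of x]
    by (simp add: N_def P)
  have "bop N"
  proof (rule bopI)
    show "bounded_linear N" unfolding N_def by (rule blinfun.bounded_linear_right)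
    fix x
    have "(\<lambda>n. (Y ^^ n) (cJ x)) = (\<lambda>n. cJ ((Y ^^ n) x))"
      using bop_funpow[OF Y(1)] by (simp add: bop_apply_cJ)
    then show "N (cJ x) = cJ (N x)"
      using N_sums[of "cJ x"] bounded_linear.sums[OF bounded_linear_cJ N_sums[of x]] sums_unique2
      by metis
  qed
  from \<open>bop N\<close> N_sums show ?thesis by (rule that)
qed

lemma invertible_op_id_minus:
  assumes Y: "bop Y" "\<And>x. norm (Y x) \<le> r * norm x" and r: "0 \<le> r" "r < 1"
  shows "invertible_op (\<lambda>x. x - Y x)"
proof -
  obtain N where N: "bop N" "\<And>x. (\<lambda>n. (Y ^^ n) x) sums N x"
    by (rule neumann_series[OF Y r]) (rule that)
  have telescope: "(\<lambda>n. (Y ^^ n) x - (Y ^^ Suc n) x) sums x" for x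
  proof -
    have "(\<lambda>n. r ^ n * norm x) \<longlonglongrightarrow> 0"
      using r by (intro tendsto_mult_left_zero LIMSEQ_power_zero) auto
    then have "(\<lambda>n. (Y ^^ n) x) \<longlonglongrightarrow> 0"
      by (rule Lim_null_comparison[OF always_eventually[OF allI[OF norm_funpow_le[OF Y(2) r(1)]]]])
    from telescope_sums'[OF this] show ?thesis by simp
  qed
  have "N (x - Y x) = x" for x
  proof -
    have "(\<lambda>n. (Y ^^ n) (x - Y x)) = (\<lambda>n. (Y ^^ n) x - (Y ^^ Suc n) x)"
      using bop_funpow[OF Y(1)] by (simp add: bop_apply_diff funpow_swap1)
    then show ?thesis
      using N(2)[of "x - Y x"] telescope[of x] sums_unique2 by metis
  qed
  moreover have "N x - Y (N x) = x" for x
    using sums_diff[OF N(2) bounded_linear.sums[OF bop_bounded_linear[OF Y(1)] N(2)]]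
      telescope[of x] sums_unique2 by fastforce
  ultimately show ?thesis
    using bop_diff[OF bop_ident Y(1)] N(1) by (intro invertible_opI[of _ N]) auto
qed

lemma norm_blinfun_compose_self_diff_le:
  fixes Y Z :: "'a::real_normed_vector \<Rightarrow>\<^sub>L 'a"
  shows "norm ((Y o\<^sub>L Y) - (Z o\<^sub>L Z)) \<le> (norm Y + norm Z) * norm (Y - Z)"
proof -
  have "(Y o\<^sub>L Y) - (Z o\<^sub>L Z) = (Y o\<^sub>L (Y - Z)) + ((Y - Z) o\<^sub>L Z)"
    by (rule blinfun_eqI) (simp add: blinfun.diff_left blinfun.diff_right blinfun.add_left)
  then show ?thesis
    using norm_triangle_ineq[of "Y o\<^sub>L (Y - Z)" "(Y - Z) o\<^sub>L Z"]
      norm_blinfun_compose[of Y "Y - Z"] norm_blinfun_compose[of "Y - Z" Z]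
    by (simp add: algebra_simps)
qed

definition selfadjoint_ball :: "real \<Rightarrow> ('a::complex_hilbert \<Rightarrow>\<^sub>L 'a) set" where
  "selfadjoint_ball \<rho> = {Y. norm Y \<le> \<rho> \<and>
    (\<forall>x. blinfun_apply Y (cJ x) = cJ (blinfun_apply Y x)) \<and>
    (\<forall>x y. cinner (blinfun_apply Y x) y = cinner x (blinfun_apply Y y))}"

lemma closed_selfadjoint_ball: "closed (selfadjoint_ball \<rho>)"
  unfolding selfadjoint_ball_def
  by (intro closed_Collect_conj closed_Collect_all closed_Collect_le closed_Collect_eq
      continuous_intros bounded_linear.continuous_on[OF bounded_linear_cJ]
      bounded_linear.continuous_on[OF bounded_linear_cinner_left]
      bounded_linear.continuous_on[OF bounded_linear_cinner_right])

lemma half_square_map_dist_le: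
  fixes T Y Z :: "'a::real_normed_vector \<Rightarrow>\<^sub>L 'a"
  assumes "norm Y \<le> \<rho>" "norm Z \<le> \<rho>"
  shows "dist ((1/2) *\<^sub>R (T + (Y o\<^sub>L Y))) ((1/2) *\<^sub>R (T + (Z o\<^sub>L Z))) \<le> \<rho> * dist Y Z"
proof -
  have "(1/2) *\<^sub>R (T + (Y o\<^sub>L Y)) - (1/2) *\<^sub>R (T + (Z o\<^sub>L Z)) = (1/2) *\<^sub>R ((Y o\<^sub>L Y) - (Z o\<^sub>L Z))"
    by (simp add: algebra_simps)
  then have "dist ((1/2) *\<^sub>R (T + (Y o\<^sub>L Y))) ((1/2) *\<^sub>R (T + (Z o\<^sub>L Z))) =
      norm ((Y o\<^sub>L Y) - (Z o\<^sub>L Z)) / 2"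
    by (simp add: dist_norm)
  also have "\<dots> \<le> (\<rho> + \<rho>) * norm (Y - Z) / 2"
  proof -
    have "(norm Y + norm Z) * norm (Y - Z) \<le> (\<rho> + \<rho>) * norm (Y - Z)"
      using assms by (intro mult_right_mono) auto
    then show ?thesis using norm_blinfun_compose_self_diff_le[of Y Z] by linarith
  qed
  finally show ?thesis by (simp add: dist_norm)
qed

lemma half_square_map_selfadjoint_ball:
  assumes T: "T \<in> selfadjoint_ball r" and "Y \<in> selfadjoint_ball \<rho>" and "r + \<rho> * \<rho> \<le> 2 * \<rho>"
  shows "(1/2) *\<^sub>R (T + (Y o\<^sub>L Y)) \<in> selfadjoint_ball \<rho>"
proof -
  have T: "norm T \<le> r" "\<And>x. T (cJ x) = cJ (T x)" "\<And>x y. cinner (T x) y = cinner x (T y)"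
    and Y: "norm Y \<le> \<rho>" "\<And>x. Y (cJ x) = cJ (Y x)" "\<And>x y. cinner (Y x) y = cinner x (Y y)"
    using assms(1,2) by (auto simp: selfadjoint_ball_def)
  have "norm ((1/2) *\<^sub>R (T + (Y o\<^sub>L Y))) \<le> (norm T + norm Y * norm Y) / 2"
    using norm_triangle_ineq[of T "Y o\<^sub>L Y"] norm_blinfun_compose[of Y Y] by simp
  also have "\<dots> \<le> (r + \<rho> * \<rho>) / 2"
    using T(1) Y(1) order.trans[OF norm_ge_zero Y(1)]
    by (intro divide_right_mono add_mono mult_mono) auto
  finally show ?thesis
    using assms(3) T(2,3) Y(2,3)
    by (auto simp: selfadjoint_ball_def blinfun.add_left blinfun.scaleR_left cJ_add cJ_scaleR
        cinner_add_left cinner_add_right cinner_scaleR_left cinner_scaleR_right)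
qed

lemma selfadjoint_sqrt_id_minus:
  fixes T :: "'a::complex_hilbert \<Rightarrow> 'a"
  assumes T: "bop T" "\<And>x y. cinner (T x) y = cinner x (T y)" "\<And>x. norm (T x) \<le> r * norm x"
    and r: "0 \<le> r" "r < 1"
  obtains Y where "bop Y" "\<And>x y. cinner (Y x) y = cinner x (Y y)"
    "\<And>x. norm (Y x) \<le> (1 + r) / 2 * norm x" "\<And>x. Y (Y x) = 2 *\<^sub>R Y x - T x"
proof -
  \<comment> \<open>(I - Y)^2 = I - T iff Y = (T + Y^2) / 2, and this map is a contraction on the ball
    of radius \<rho> of self-adjoint operators\<close>
  define \<rho> where "\<rho> = (1 + r) / 2"
  have \<rho>: "0 \<le> \<rho>" "\<rho> < 1" "r + \<rho> * \<rho> \<le> 2 * \<rho>"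
  proof -
    have "(1 + r)\<^sup>2 \<le> 2\<^sup>2" using r by (intro power_mono) auto
    then show "r + \<rho> * \<rho> \<le> 2 * \<rho>" by (simp add: \<rho>_def power2_eq_square field_simps)
  qed (use r in \<open>auto simp: \<rho>_def\<close>)
  define TL where "TL = Blinfun T"
  have TL: "blinfun_apply TL = T"
    using T(1) by (simp add: TL_def bop_bounded_linear bounded_linear_Blinfun_apply)
  have "TL \<in> selfadjoint_ball r"
    using T r by (auto simp: selfadjoint_ball_def TL bop_apply_cJ intro: norm_blinfun_bound)
  define F where "F Y = (1/2) *\<^sub>R (TL + (Y o\<^sub>L Y))" for Y
  have "complete (selfadjoint_ball \<rho>)"
    by (simp add: complete_eq_closed closed_selfadjoint_ball)
  moreover have "selfadjoint_ball \<rho> \<noteq> {}"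
    using \<rho>(1) by (auto simp: selfadjoint_ball_def intro!: exI[of _ 0])
  moreover have "F ` selfadjoint_ball \<rho> \<subseteq> selfadjoint_ball \<rho>"
    using half_square_map_selfadjoint_ball[OF \<open>TL \<in> selfadjoint_ball r\<close> _ \<rho>(3)]
    by (auto simp: F_def)
  moreover have "dist (F Y) (F Z) \<le> \<rho> * dist Y Z"
    if "Y \<in> selfadjoint_ball \<rho>" "Z \<in> selfadjoint_ball \<rho>" for Y Z
    using that unfolding F_def by (intro half_square_map_dist_le) (auto simp: selfadjoint_ball_def)
  ultimately have "\<exists>!Y\<in>selfadjoint_ball \<rho>. F Y = Y"
    using \<rho>(1,2) by (intro Banach_fix)
  then obtain Y where Y: "Y \<in> selfadjoint_ball \<rho>" "F Y = Y"
    by blast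
  have fixed: "Y (Y x) = 2 *\<^sub>R Y x - T x" for x
  proof -
    have "(1/2) *\<^sub>R (T x + Y (Y x)) = Y x"
      using arg_cong[OF Y(2), of "\<lambda>Y. blinfun_apply Y x"]
      by (simp add: F_def TL blinfun.add_left blinfun.scaleR_left)
    then have "2 *\<^sub>R ((1/2) *\<^sub>R (T x + Y (Y x))) = 2 *\<^sub>R Y x" by simp
    then show ?thesis by (simp add: algebra_simps)
  qed
  show ?thesis
  proof (rule that[of "blinfun_apply Y"])
    show "bop (blinfun_apply Y)"
      using Y(1) by (auto simp: selfadjoint_ball_def intro: bopI blinfun.bounded_linear_right)
    show "norm (Y x) \<le> (1 + r) / 2 * norm x" for x
      using Y(1) norm_blinfun[of Y x] mult_right_mono[of "norm Y" \<rho> "norm x"]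
      by (simp add: selfadjoint_ball_def \<rho>_def)
  qed (use Y(1) fixed in \<open>auto simp: selfadjoint_ball_def\<close>)
qed

lemma id_minus_scaled_positive_op:
  assumes Q: "positive_op Q" "op_le (op_scal c) Q" "op_le Q (op_scal d)" "0 < c" "c \<le> d"
  shows "bop (\<lambda>x. x - (1/d) *\<^sub>R Q x)"
    and "cinner (x - (1/d) *\<^sub>R Q x) y = cinner x (y - (1/d) *\<^sub>R Q y)"
    and "norm (x - (1/d) *\<^sub>R Q x) \<le> (1 - c / d) * norm x"
proof -
  define T where "T x = x - (1/d) *\<^sub>R Q x" for x
  show bT: "bop (\<lambda>x. x - (1/d) *\<^sub>R Q x)"
    by (intro bop_diff bop_ident bop_scaleR positive_op_bop Q(1))
  show "cinner (x - (1/d) *\<^sub>R Q x) y = cinner x (y - (1/d) *\<^sub>R Q y)"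
    by (simp add: cinner_diff_left cinner_diff_right cinner_scaleR_left cinner_scaleR_right
        positive_op_selfadjoint[OF Q(1)])
  have T_inner: "inner x (T x) = (norm x)\<^sup>2 - (1/d) * inner x (Q x)" "inner (cJ x) (T x) = 0" for x
    using Q(1) by (simp_all add: T_def inner_diff_right power2_norm_eq_inner positive_op_iff)
  have "positive_op T" "op_le T (op_scal (1 - c / d))"
    using Q bT unfolding T_def[abs_def]
    by (auto simp: positive_op_iff op_le_scal_left op_le_scal_right T_inner[unfolded T_def]
        field_simps)
  then show "norm (x - (1/d) *\<^sub>R Q x) \<le> (1 - c / d) * norm x"
    using Q(4,5) positive_op_norm_le[of T "1 - c / d" x] by (simp add: T_def)
qed

lemma positive_op_sqrt:
  assumes Q: "positive_op Q" "0 < c" "op_le (op_scal c) Q"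
  obtains R where "invertible_op R" "adjoint R = R" "R \<circ> R = Q"
proof -
  obtain d where d: "c \<le> d" "op_le Q (op_scal d)"
    using Q(1) by (rule positive_op_bounded_above)
  have d0: "0 < d" using Q(2) d(1) by linarith
  define r where "r = 1 - c / d"
  have r: "0 \<le> r" "r < 1" using Q(2) d d0 by (auto simp: r_def field_simps)
  define T where "T x = x - (1/d) *\<^sub>R Q x" for x
  note T = id_minus_scaled_positive_op[OF Q(1,3) d(2) Q(2) d(1), folded T_def r_def]
  obtain Y where Y: "bop Y" "\<And>x y. cinner (Y x) y = cinner x (Y y)"
    "\<And>x. norm (Y x) \<le> (1 + r) / 2 * norm x" "\<And>x. Y (Y x) = 2 *\<^sub>R Y x - T x"
    by (rule selfadjoint_sqrt_id_minus[OF T r]) (rule that)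
  define R where "R x = sqrt d *\<^sub>R (x - Y x)" for x
  have "invertible_op (\<lambda>x. x - Y x)"
    using Y r by (intro invertible_op_id_minus[of Y "(1 + r) / 2"]) auto
  then have "invertible_op R"
    using d0 unfolding R_def by (intro invertible_op_scaleR) auto
  moreover have "adjoint R = R"
  proof (rule adjoint_eqI)
    show "bop R" unfolding R_def by (intro bop_scaleR bop_diff bop_ident Y(1))
    show "cinner (R x) y = cinner x (R y)" for x y
      by (simp add: R_def cinner_scaleR_left cinner_scaleR_right cinner_diff_left
          cinner_diff_right Y(2))
  qed
  moreover have "R (R x) = Q x" for x
  proof -
    have "R (R x) = (sqrt d * sqrt d) *\<^sub>R ((x - Y x) - Y (x - Y x))"
      by (simp add: R_def bop_apply_diff[OF Y(1)] bop_apply_scaleR[OF Y(1)] algebra_simps)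
    also have "(x - Y x) - Y (x - Y x) = (1/d) *\<^sub>R Q x"
      by (simp add: bop_apply_diff[OF Y(1)] Y(4) T_def scaleR_2)
    finally show ?thesis using d0 by simp
  qed
  then have "R \<circ> R = Q" by (simp add: fun_eq_iff)
  ultimately show ?thesis by (rule that)
qed

lemma positive_op_invertible:
  assumes "positive_op Q" "0 < c" "op_le (op_scal c) Q"
  shows "invertible_op Q"
proof -
  obtain R where "invertible_op R" "R \<circ> R = Q"
    using assms by (rule positive_op_sqrt)
  then show ?thesis using invertible_op_comp by metis
qed

section \<open>The weak* topology\<close>

lemma continuous_map_topology_generated_byI:
  assumes "\<And>x. x \<in> topspace X \<Longrightarrow> f x \<in> \<Union>\<S>"
    and "\<And>s. s \<in> \<S> \<Longrightarrow> openin X {x \<in> topspace X. f x \<in> s}"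
  shows "continuous_map X (topology_generated_by \<S>) f"
  unfolding continuous_map_def
proof (intro conjI allI impI)
  show "f \<in> topspace X \<rightarrow> topspace (topology_generated_by \<S>)" using assms(1) by auto
  fix V assume "openin (topology_generated_by \<S>) V"
  then have "generate_topology_on \<S> V" by (rule openin_topology_generated_by)
  then show "openin X {x \<in> topspace X. f x \<in> V}"
  proof (induction rule: generate_topology_on.induct)
    case (Int a b)
    have "{x \<in> topspace X. f x \<in> a \<inter> b} = {x \<in> topspace X. f x \<in> a} \<inter> {x \<in> topspace X. f x \<in> b}"
      by auto
    then show ?case using Int by (simp add: openin_Int)
  next
    case (UN K)
    have "{x \<in> topspace X. f x \<in> \<Union>K} = (\<Union>k\<in>K. {x \<in> topspace X. f x \<in> k})" by auto
    then show ?case using UN by (auto intro!: openin_Union)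
  qed (simp_all add: assms(2))
qed

lemma limitin_topology_generated_byI:
  assumes "l \<in> \<Union>\<S>" and "\<And>s. s \<in> \<S> \<Longrightarrow> l \<in> s \<Longrightarrow> \<forall>\<^sub>F k in F. f k \<in> s"
  shows "limitin (topology_generated_by \<S>) f l F"
  unfolding limitin_def
proof (intro conjI allI impI)
  show "l \<in> topspace (topology_generated_by \<S>)" using assms(1) by simp
  fix V assume "openin (topology_generated_by \<S>) V \<and> l \<in> V"
  then have "generate_topology_on \<S> V" "l \<in> V" by (auto dest: openin_topology_generated_by)
  then show "\<forall>\<^sub>F k in F. f k \<in> V"
  proof (induction rule: generate_topology_on.induct)
    case (Int a b) then show ?case by (auto intro: eventually_conj)
  next
    case (UN K)
    then obtain k where "k \<in> K" "l \<in> k" by auto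
    with UN have "\<forall>\<^sub>F i in F. f i \<in> k" by blast
    with \<open>k \<in> K\<close> show ?case by (auto elim: eventually_mono)
  qed (simp_all add: assms(2))
qed

definition square_summable :: "(nat \<Rightarrow> 'a::real_normed_vector) \<Rightarrow> bool" where
  "square_summable xs \<longleftrightarrow> summable (\<lambda>n. (norm (xs n))\<^sup>2)"

definition wstar_subbasis :: "('a::complex_hilbert \<Rightarrow> 'a) set set" where
  "wstar_subbasis = insert BH {{X \<in> BH. sw_functional xs ys X \<in> U} | xs ys U.
        square_summable xs \<and> square_summable ys \<and> open U}"

lemma wstar_top_eq: "wstar_top = topology_generated_by wstar_subbasis"
  by (simp add: wstar_top_def wstar_subbasis_def square_summable_def)

lemma topspace_wstar_top [simp]: "topspace wstar_top = BH"
  unfolding wstar_top_eq topology_generated_by_topspace by (auto simp: wstar_subbasis_def)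

lemma openin_wstar_top_basic:
  "square_summable xs \<Longrightarrow> square_summable ys \<Longrightarrow> open U \<Longrightarrow>
    openin wstar_top {X \<in> BH. sw_functional xs ys X \<in> U}"
  unfolding wstar_top_eq by (rule topology_generated_by_Basis) (auto simp: wstar_subbasis_def)

lemma continuous_map_wstar_topI:
  fixes f :: "'b \<Rightarrow> ('a::complex_hilbert \<Rightarrow> 'a)"
  assumes "\<And>x. x \<in> topspace X \<Longrightarrow> f x \<in> BH"
    and "\<And>xs ys U. square_summable xs \<Longrightarrow> square_summable ys \<Longrightarrow> open U \<Longrightarrow>
           openin X {x \<in> topspace X. sw_functional xs ys (f x) \<in> U}"
  shows "continuous_map X wstar_top f"
  unfolding wstar_top_eq
proof (rule continuous_map_topology_generated_byI)
  fix s :: "('a \<Rightarrow> 'a) set" assume "s \<in> wstar_subbasis"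
  then consider "s = BH" | xs ys U where "s = {X \<in> BH. sw_functional xs ys X \<in> U}"
    "square_summable xs" "square_summable ys" "open U"
    unfolding wstar_subbasis_def by blast
  then show "openin X {x \<in> topspace X. f x \<in> s}"
  proof cases
    case 1
    then have "{x \<in> topspace X. f x \<in> s} = topspace X"
      using assms(1) by auto
    then show ?thesis by simp
  next
    case 2
    then have "{x \<in> topspace X. f x \<in> s} = {x \<in> topspace X. sw_functional xs ys (f x) \<in> U}"
      using assms(1) by auto
    then show ?thesis using assms(2)[OF 2(2-4)] by simp
  qed
qed (use assms(1) in \<open>auto simp: wstar_subbasis_def\<close>)

lemma limitin_wstar_topI:
  fixes f :: "'b \<Rightarrow> ('a::complex_hilbert \<Rightarrow> 'a)"
  assumes "l \<in> BH" "\<forall>\<^sub>F k in F. f k \<in> BH"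
    and "\<And>xs ys. square_summable xs \<Longrightarrow> square_summable ys \<Longrightarrow>
           ((\<lambda>k. sw_functional xs ys (f k)) \<longlongrightarrow> sw_functional xs ys l) F"
  shows "limitin wstar_top f l F"
  unfolding wstar_top_eq
proof (rule limitin_topology_generated_byI)
  fix s :: "('a \<Rightarrow> 'a) set" assume "s \<in> wstar_subbasis" "l \<in> s"
  then consider "s = BH" | xs ys U where "s = {X \<in> BH. sw_functional xs ys X \<in> U}"
    "square_summable xs" "square_summable ys" "open U"
    unfolding wstar_subbasis_def by blast
  then show "\<forall>\<^sub>F k in F. f k \<in> s"
  proof cases
    case 2
    then have "\<forall>\<^sub>F k in F. sw_functional xs ys (f k) \<in> U"
      using \<open>l \<in> s\<close> topological_tendstoD[OF assms(3)[OF 2(2,3)] 2(4)] by blast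
    then show ?thesis using assms(2) unfolding 2(1) by (auto elim: eventually_elim2)
  qed (use assms(2) in simp)
qed (use assms(1) in \<open>simp add: wstar_subbasis_def\<close>)

lemma limitin_wstar_topD:
  assumes "limitin wstar_top f l F" "square_summable xs" "square_summable ys"
  shows "((\<lambda>k. sw_functional xs ys (f k)) \<longlongrightarrow> sw_functional xs ys l) F"
proof (rule topological_tendstoI)
  fix U assume U: "open U" "sw_functional xs ys l \<in> U"
  have "\<forall>\<^sub>F k in F. f k \<in> {X \<in> BH. sw_functional xs ys X \<in> U}"
    using assms(1) U openin_wstar_top_basic[OF assms(2,3) U(1)] unfolding limitin_def by auto
  then show "\<forall>\<^sub>F k in F. sw_functional xs ys (f k) \<in> U" by (auto elim: eventually_mono)
qed

definition single_seq :: "'a \<Rightarrow> nat \<Rightarrow> 'a::zero" where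
  "single_seq x n = (if n = 0 then x else 0)"

lemma square_summable_single_seq: "square_summable (single_seq x)"
  unfolding square_summable_def single_seq_def by (rule summable_finite[of "{0}"]) auto

lemma sw_functional_single_seq:
  "bop X \<Longrightarrow> sw_functional (single_seq x) (single_seq y) X = cinner x (X y)"
  unfolding sw_functional_def single_seq_def
  by (subst suminf_finite[of "{0}"]) (auto simp: bop_apply_zero)

lemma limitin_wstar_top_cinner:
  assumes "limitin wstar_top f l F" "\<And>k. bop (f k)"
  shows "((\<lambda>k. cinner x (f k y)) \<longlongrightarrow> cinner x (l y)) F"
proof -
  have "bop l" using assms(1) by (simp add: limitin_def BH_iff)
  then show ?thesis
    using limitin_wstar_topD[OF assms(1) square_summable_single_seq square_summable_single_seq,
        of x y]
    by (simp add: sw_functional_single_seq assms(2))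
qed

lemma square_summable_bop:
  assumes "square_summable xs" "bop A"
  shows "square_summable (\<lambda>n. A (xs n))"
proof -
  obtain K where K: "\<And>x. norm (A x) \<le> norm x * K" using bop_bound assms(2) by blast
  have bound: "norm ((norm (A (xs n)))\<^sup>2) \<le> K\<^sup>2 * (norm (xs n))\<^sup>2" for n
  proof -
    have "(norm (A (xs n)))\<^sup>2 \<le> (norm (xs n) * K)\<^sup>2"
      by (rule power_mono[OF K norm_ge_zero])
    then show ?thesis by (simp add: power_mult_distrib mult.commute)
  qed
  show ?thesis
    unfolding square_summable_def
  proof (rule summable_comparison_test)
    show "\<exists>N. \<forall>n\<ge>N. norm ((norm (A (xs n)))\<^sup>2) \<le> K\<^sup>2 * (norm (xs n))\<^sup>2"
      using bound by blast
    show "summable (\<lambda>n. K\<^sup>2 * (norm (xs n))\<^sup>2)"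
      using assms(1) unfolding square_summable_def by (rule summable_mult)
  qed
qed

lemma continuous_map_sandwich:
  fixes A B :: "'a::complex_hilbert \<Rightarrow> 'a"
  assumes "bop A" "bop B"
  shows "continuous_map wstar_top wstar_top (\<lambda>X. A \<circ> X \<circ> B)"
proof (rule continuous_map_wstar_topI)
  show "A \<circ> X \<circ> B \<in> BH" if "X \<in> topspace wstar_top" for X
    using that assms by (simp add: BH_iff bop_comp)
  fix xs ys :: "nat \<Rightarrow> 'a" and U :: "complex set"
  assume h: "square_summable xs" "square_summable ys" "open U"
  have "sw_functional xs ys (A \<circ> X \<circ> B) =
      sw_functional (\<lambda>n. adjoint A (xs n)) (\<lambda>n. B (ys n)) X" for X
    unfolding sw_functional_def by (simp add: cinner_adjoint_left[OF assms(1)])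
  then show "openin wstar_top {X \<in> topspace wstar_top. sw_functional xs ys (A \<circ> X \<circ> B) \<in> U}"
    using openin_wstar_top_basic[OF square_summable_bop[OF h(1) adjoint_bop[OF assms(1)]]
        square_summable_bop[OF h(2) assms(2)] h(3)]
    by simp
qed

lemma summable_norm_mult_if_square_summable:
  assumes "square_summable xs" "square_summable ys"
  shows "summable (\<lambda>n. norm (xs n) * norm (ys n))"
proof (rule summable_comparison_test[of _ "\<lambda>n. (norm (xs n))\<^sup>2 + (norm (ys n))\<^sup>2"])
  have "norm (xs n) * norm (ys n) \<le> (norm (xs n))\<^sup>2 + (norm (ys n))\<^sup>2" for n
    using sum_squares_bound[of "norm (xs n)" "norm (ys n)"]
      mult_nonneg_nonneg[OF norm_ge_zero[of "xs n"] norm_ge_zero[of "ys n"]] by linarith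
  then show "\<exists>N. \<forall>n\<ge>N. norm (norm (xs n) * norm (ys n)) \<le> (norm (xs n))\<^sup>2 + (norm (ys n))\<^sup>2"
    by simp
  show "summable (\<lambda>n. (norm (xs n))\<^sup>2 + (norm (ys n))\<^sup>2)"
    using assms by (intro summable_add) (auto simp: square_summable_def)
qed

lemma sw_functional_tendsto:
  fixes T :: "'k \<Rightarrow> 'a::complex_hilbert \<Rightarrow> 'a"
  assumes xs: "square_summable xs" and ys: "square_summable ys"
    and bound: "\<And>k x y. cmod (cinner x (T k y)) \<le> M * norm x * norm y"
    and lim: "\<And>x y. ((\<lambda>k. cinner x (T k y)) \<longlongrightarrow> cinner x (Q y)) F"
    and F: "F \<noteq> bot"
  shows "((\<lambda>k. sw_functional xs ys (T k)) \<longlongrightarrow> sw_functional xs ys Q) F"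
proof -
  have sp: "summable (\<lambda>n. M * (norm (xs n) * norm (ys n)))"
    by (intro summable_mult summable_norm_mult_if_square_summable xs ys)
  have "cmod (cinner x (Q y)) \<le> M * norm x * norm y" for x y
    by (rule tendsto_upperbound[OF tendsto_norm[OF lim] _ F]) (simp add: bound)
  then have "summable (\<lambda>n. cinner (xs n) (Q (ys n)))"
    by (intro summable_comparison_test[OF _ sp]) (auto simp: mult.assoc)
  \<comment> \<open>the partial sums converge uniformly in k by the M-test, so the limits can be swapped\<close>
  show ?thesis
  proof (rule swap_uniform_limit'[where F=sequentially and S=UNIV])
    show "\<forall>\<^sub>F N in sequentially. ((\<lambda>k. \<Sum>n<N. cinner (xs n) (T k (ys n))) \<longlongrightarrow>
        (\<Sum>n<N. cinner (xs n) (Q (ys n)))) F"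
      by (intro always_eventually allI tendsto_sum lim)
    show "(\<lambda>N. \<Sum>n<N. cinner (xs n) (Q (ys n))) \<longlonglongrightarrow> sw_functional xs ys Q"
      unfolding sw_functional_def by (rule summable_LIMSEQ) fact
    show "uniform_limit UNIV (\<lambda>N k. \<Sum>n<N. cinner (xs n) (T k (ys n)))
        (\<lambda>k. sw_functional xs ys (T k)) sequentially"
      unfolding sw_functional_def by (rule Weierstrass_m_test[OF _ sp]) (metis bound mult.assoc)
  qed (use F in auto)
qed

section \<open>Sets of density zero\<close>

definition zero_density :: "nat set \<Rightarrow> bool" where
  "zero_density A \<longleftrightarrow> (\<forall>\<delta>>0. \<exists>K0. \<forall>K\<ge>K0. real (card {k\<in>A. k < K}) \<le> \<delta> * real K)"

lemma finite_Collect_less_nat: "finite {k\<in>A. k < (K::nat)}"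
  by (rule finite_subset[of _ "{..<K}"]) auto

lemma zero_density_subset:
  assumes "zero_density B" "A \<subseteq> B"
  shows "zero_density A"
  unfolding zero_density_def
proof (intro allI impI)
  fix \<delta> :: real assume "\<delta> > 0"
  then obtain K0 where K0: "\<forall>K\<ge>K0. real (card {k\<in>B. k < K}) \<le> \<delta> * real K"
    using assms(1) zero_density_def by blast
  have "card {k\<in>A. k < K} \<le> card {k\<in>B. k < K}" for K
    using assms(2) by (intro card_mono finite_Collect_less_nat) auto
  then show "\<exists>K0. \<forall>K\<ge>K0. real (card {k\<in>A. k < K}) \<le> \<delta> * real K"
    using K0 by (meson of_nat_le_iff order_trans)
qed

lemma zero_density_Un:
  assumes "zero_density A" "zero_density B"
  shows "zero_density (A \<union> B)"
  unfolding zero_density_def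
proof (intro allI impI)
  fix \<delta> :: real assume "\<delta> > 0"
  then obtain K1 K2 where K1: "\<forall>K\<ge>K1. real (card {k\<in>A. k < K}) \<le> \<delta> / 2 * real K"
    and K2: "\<forall>K\<ge>K2. real (card {k\<in>B. k < K}) \<le> \<delta> / 2 * real K"
    using assms unfolding zero_density_def by (meson half_gt_zero)
  have "real (card {k\<in>A \<union> B. k < K}) \<le> \<delta> * real K" if "max K1 K2 \<le> K" for K
  proof -
    have "{k\<in>A \<union> B. k < K} = {k\<in>A. k < K} \<union> {k\<in>B. k < K}" by auto
    then have "card {k\<in>A \<union> B. k < K} \<le> card {k\<in>A. k < K} + card {k\<in>B. k < K}"
      by (simp add: card_Un_le)
    then show ?thesis using K1 K2 that by fastforce
  qed
  then show "\<exists>K0. \<forall>K\<ge>K0. real (card {k\<in>A \<union> B. k < K}) \<le> \<delta> * real K" by blast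
qed

lemma zero_density_finite:
  assumes "finite A"
  shows "zero_density A"
  unfolding zero_density_def
proof (intro allI impI)
  fix \<delta> :: real assume d: "\<delta> > 0"
  define K0 where "K0 = nat \<lceil>real (card A) / \<delta>\<rceil>"
  have "real (card {k\<in>A. k < K}) \<le> \<delta> * real K" if "K0 \<le> K" for K
  proof -
    have "card {k\<in>A. k < K} \<le> card A" using assms by (intro card_mono) auto
    moreover have "real (card A) / \<delta> \<le> real K"
      using that real_nat_ceiling_ge[of "real (card A) / \<delta>"] unfolding K0_def by linarith
    ultimately show ?thesis using d by (simp add: field_simps)
  qed
  then show "\<exists>K0. \<forall>K\<ge>K0. real (card {k\<in>A. k < K}) \<le> \<delta> * real K" by blast
qed

lemma not_zero_density_UNIV: "\<not> zero_density UNIV"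
proof
  assume "zero_density UNIV"
  then obtain K0 where K0: "\<forall>K\<ge>K0. real (card {k \<in> (UNIV::nat set). k < K}) \<le> 1 / 2 * real K"
    unfolding zero_density_def by (meson half_gt_zero zero_less_one)
  have "{k \<in> (UNIV::nat set). k < Suc K0} = {..<Suc K0}" by auto
  then have "real (Suc K0) \<le> 1 / 2 * real (Suc K0)"
    using K0 by (metis card_lessThan le_SucI order_refl)
  then show False by simp
qed

definition density_filter :: "nat filter" where
  "density_filter = Abs_filter (\<lambda>P. zero_density {k. \<not> P k})"

lemma eventually_density_filter: "eventually P density_filter \<longleftrightarrow> zero_density {k. \<not> P k}"
  unfolding density_filter_def
proof (rule eventually_Abs_filter, rule is_filter.intro)
  show "zero_density {k. \<not> True}" by (simp add: zero_density_finite)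
next
  fix P Q :: "nat \<Rightarrow> bool"
  show "zero_density {k. \<not> P k} \<Longrightarrow> zero_density {k. \<not> Q k} \<Longrightarrow> zero_density {k. \<not> (P k \<and> Q k)}"
    using zero_density_Un[of "{k. \<not> P k}" "{k. \<not> Q k}"] by (simp add: Collect_disj_eq[symmetric])
  show "\<forall>x. P x \<longrightarrow> Q x \<Longrightarrow> zero_density {k. \<not> P k} \<Longrightarrow> zero_density {k. \<not> Q k}"
    by (metis (mono_tags, lifting) zero_density_subset mem_Collect_eq subsetI)
qed

lemma density_filter_ne_bot: "density_filter \<noteq> bot"
  unfolding trivial_limit_def eventually_density_filter using not_zero_density_UNIV by simp

lemma density_filter_le_sequentially: "density_filter \<le> sequentially"
  unfolding le_filter_def eventually_density_filter eventually_sequentially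
proof (intro allI impI)
  fix P :: "nat \<Rightarrow> bool" assume "\<exists>N. \<forall>n\<ge>N. P n"
  then obtain N where "\<forall>n\<ge>N. P n" by blast
  then have "{k. \<not> P k} \<subseteq> {..<N}" by (auto simp: not_less[symmetric])
  then show "zero_density {k. \<not> P k}"
    by (intro zero_density_subset[OF zero_density_finite[of "{..<N}"]]) auto
qed

lemma card_large_terms_le:
  fixes s :: "nat \<Rightarrow> real"
  assumes "\<And>k. 0 \<le> s k" "(\<Sum>k<K. s k) \<le> C * real K" "0 < \<epsilon>" "0 < L"
  shows "real (card {k. k < K \<and> \<epsilon> * real k \<le> s k}) \<le> real L + C * real K / (\<epsilon> * real L)"
proof -
  define B where "B = {k. L \<le> k \<and> k < K \<and> \<epsilon> * real k \<le> s k}"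
  have fB: "finite B" by (rule finite_subset[of _ "{..<K}"]) (auto simp: B_def)
  have "card {k. k < K \<and> \<epsilon> * real k \<le> s k} \<le> card ({..<L} \<union> B)"
    using fB by (intro card_mono) (auto simp: B_def)
  also have "\<dots> \<le> L + card B" using card_Un_le[of "{..<L}" B] by simp
  finally have le: "real (card {k. k < K \<and> \<epsilon> * real k \<le> s k}) \<le> real L + real (card B)"
    by linarith
  have "real (card B) * (\<epsilon> * real L) = (\<Sum>k\<in>B. \<epsilon> * real L)" by simp
  also have "\<dots> \<le> (\<Sum>k\<in>B. s k)"
    using assms(3) by (intro sum_mono) (auto simp: B_def intro: order_trans[rotated])
  also have "\<dots> \<le> (\<Sum>k<K. s k)" using assms(1) by (intro sum_mono2) (auto simp: B_def)
  finally have "real (card B) \<le> C * real K / (\<epsilon> * real L)"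
    using assms(2-4) by (simp add: field_simps)
  with le show ?thesis by linarith
qed

lemma zero_density_large_terms:
  fixes s :: "nat \<Rightarrow> real"
  assumes s: "\<And>k. 0 \<le> s k" and C: "\<And>K. (\<Sum>k<K. s k) \<le> C * real K" and e: "0 < \<epsilon>"
  shows "zero_density {k. \<epsilon> * real k \<le> s k}"
  unfolding zero_density_def
proof (intro allI impI)
  fix \<delta> :: real assume "\<delta> > 0"
  define d where "d = \<delta> / 2"
  have d: "d > 0" using \<open>\<delta> > 0\<close> by (simp add: d_def)
  have C0: "0 \<le> C" using C[of 1] s[of 0] by simp
  \<comment> \<open>with L = \<lceil>d K\<rceil>, both terms of the bound of card_large_terms_le are small compared to K\<close>
  have "real (card {k \<in> {k. \<epsilon> * real k \<le> s k}. k < K}) \<le> \<delta> * real K"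
    if K: "(1 + C / (\<epsilon> * d)) / d \<le> real K" for K
  proof -
    have "0 < (1 + C / (\<epsilon> * d)) / d"
      using d e C0 by (intro divide_pos_pos add_pos_nonneg) auto
    then have Kpos: "0 < real K" using K by linarith
    define L where "L = nat \<lceil>d * real K\<rceil>"
    have L: "0 < L" "d * real K \<le> real L" "real L \<le> d * real K + 1"
      using d Kpos by (auto simp: L_def)
    have "real (card {k. k < K \<and> \<epsilon> * real k \<le> s k}) \<le> real L + C * real K / (\<epsilon> * real L)"
      by (rule card_large_terms_le[OF s C e L(1)])
    also have "C * real K / (\<epsilon> * real L) \<le> C * real K / (\<epsilon> * (d * real K))"
      using L(1,2) C0 e d Kpos by (intro divide_left_mono mult_left_mono mult_pos_pos) auto
    also have "\<dots> = C / (\<epsilon> * d)" using Kpos by simp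
    finally have "real (card {k. k < K \<and> \<epsilon> * real k \<le> s k}) \<le> real L + C / (\<epsilon> * d)"
      by simp
    moreover have "1 + C / (\<epsilon> * d) \<le> d * real K"
      using K d by (simp add: field_simps)
    ultimately show ?thesis
      using L(3) unfolding d_def by (simp add: conj_commute)
  qed
  moreover have "(1 + C / (\<epsilon> * d)) / d \<le> real K" if "nat \<lceil>(1 + C / (\<epsilon> * d)) / d\<rceil> \<le> K" for K
    using that real_nat_ceiling_ge[of "(1 + C / (\<epsilon> * d)) / d"] by linarith
  ultimately show "\<exists>K0. \<forall>K\<ge>K0. real (card {k \<in> {k. \<epsilon> * real k \<le> s k}. k < K}) \<le> \<delta> * real K"
    by blast
qed

lemma tendsto_density_filter_if_bounded_averages:
  fixes s :: "nat \<Rightarrow> real"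
  assumes s: "\<And>k. 0 \<le> s k" and C: "\<And>K. (\<Sum>k<K. s k) \<le> C * real K"
  shows "((\<lambda>k. s k / real k) \<longlongrightarrow> 0) density_filter"
proof (rule tendstoI)
  fix \<epsilon> :: real assume e: "\<epsilon> > 0"
  have "\<epsilon> * real k \<le> s k" if "\<epsilon> \<le> s k / real k" for k
    using that e by (cases "k = 0") (auto simp: field_simps)
  then have "{k. \<not> dist (s k / real k) 0 < \<epsilon>} \<subseteq> {k. \<epsilon> * real k \<le> s k}"
    using s by (auto simp: not_less)
  with zero_density_large_terms[OF s C e]
  show "\<forall>\<^sub>F k in density_filter. dist (s k / real k) 0 < \<epsilon>"
    unfolding eventually_density_filter by (rule zero_density_subset)
qed

section \<open>Invariant operators from bounded Cesaro averages\<close>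

lemma bop_cesaro: "linear_map \<phi> \<Longrightarrow> bop P \<Longrightarrow> bop (cesaro \<phi> k P)"
  unfolding cesaro_def by (intro bop_scaleR bop_sum linear_map_funpow_bop)

lemma cesaro_zero [simp]: "cesaro \<phi> 0 P = (\<lambda>x. 0)"
  by (simp add: cesaro_def)

lemma cesaro_step:
  assumes "linear_map \<phi>" "bop P"
  shows "\<phi> (cesaro \<phi> k P) = (\<lambda>x. cesaro \<phi> k P x + (1 / real k) *\<^sub>R ((\<phi> ^^ k) P x - P x))"
proof -
  have "\<phi> (cesaro \<phi> k P) = (\<lambda>x. (1 / real k) *\<^sub>R \<phi> (\<lambda>x. \<Sum>j<k. (\<phi> ^^ j) P x) x)"
    unfolding cesaro_def by (intro linear_map_scaleR bop_sum linear_map_funpow_bop assms)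
  also have "\<phi> (\<lambda>x. \<Sum>j<k. (\<phi> ^^ j) P x) = (\<lambda>x. \<Sum>j<k. (\<phi> ^^ Suc j) P x)"
    using linear_map_sum[OF assms(1), of "{..<k}" "\<lambda>j. (\<phi> ^^ j) P"] linear_map_funpow_bop[OF assms]
    by simp
  also have "\<dots> = (\<lambda>x. (\<Sum>j<k. (\<phi> ^^ j) P x) + (\<phi> ^^ k) P x - P x)"
  proof -
    have "(\<Sum>j<n. g (Suc j)) = (\<Sum>j<n. g j) + g n - g 0" for n and g :: "nat \<Rightarrow> 'a"
      by (induction n) (simp_all add: algebra_simps)
    from this[of "\<lambda>j. (\<phi> ^^ j) P _" k] show ?thesis by (simp add: fun_eq_iff)
  qed
  finally show ?thesis by (simp add: cesaro_def fun_eq_iff algebra_simps)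
qed

lemma cesaro_op_le_bounds:
  assumes "\<And>j. op_le (op_scal a) ((\<phi> ^^ j) P) \<and> op_le ((\<phi> ^^ j) P) (op_scal b)" "k \<ge> 1"
  shows "op_le (op_scal a) (cesaro \<phi> k P) \<and> op_le (cesaro \<phi> k P) (op_scal b)"
proof -
  have avg: "inner x (cesaro \<phi> k P x) = (\<Sum>j<k. inner x ((\<phi> ^^ j) P x)) / real k" for x
    by (simp add: cesaro_def inner_sum_right)
  have "a * (norm x)\<^sup>2 \<le> inner x ((\<phi> ^^ j) P x)" "inner x ((\<phi> ^^ j) P x) \<le> b * (norm x)\<^sup>2" for x j
    using assms(1)[of j] by (auto simp: op_le_scal_left op_le_scal_right)
  then have "(\<Sum>j<k. a * (norm x)\<^sup>2) \<le> (\<Sum>j<k. inner x ((\<phi> ^^ j) P x))"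
    "(\<Sum>j<k. inner x ((\<phi> ^^ j) P x)) \<le> (\<Sum>j<k. b * (norm x)\<^sup>2)" for x
    by (intro sum_mono; simp)+
  moreover have "inner (cJ x) (cesaro \<phi> k P x) = 0" for x
    using assms(1) by (simp add: cesaro_def inner_sum_right op_le_scal_left)
  ultimately show ?thesis
    using assms(2) by (simp add: op_le_scal_left op_le_scal_right avg field_simps)
qed

lemma bounded_family_convergent_refinement:
  fixes \<Lambda> :: "'k \<Rightarrow> 'i \<Rightarrow> 'b::{real_normed_vector,heine_borel}"
  assumes F: "F \<noteq> bot" and bound: "\<And>k i. norm (\<Lambda> k i) \<le> B i"
  obtains U L where "U \<noteq> bot" "U \<le> F" "\<And>i. ((\<lambda>k. \<Lambda> k i) \<longlongrightarrow> L i) U"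
proof -
  \<comment> \<open>Tychonoff: the family lives in a compact product of balls\<close>
  define K where "K = Pi\<^sub>E UNIV (\<lambda>i. cball (0::'b) (B i))"
  have "compactin (product_topology (\<lambda>i. euclidean) UNIV) K"
    by (simp add: K_def compactin_PiE)
  then have "compact K" by (simp add: euclidean_product_topology)
  moreover have "filtermap \<Lambda> F \<noteq> bot" using F by (simp add: filtermap_bot_iff)
  moreover have "eventually (\<lambda>v. v \<in> K) (filtermap \<Lambda> F)"
    by (auto simp: eventually_filtermap K_def PiE_UNIV_domain bound intro!: always_eventually)
  ultimately obtain L where L: "inf (nhds L) (filtermap \<Lambda> F) \<noteq> bot"
    unfolding compact_filter by blast
  define U where "U = inf (filtercomap \<Lambda> (nhds L)) F"
  have "U \<noteq> bot"
  proof
    assume "U = bot"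
    then obtain P R where "eventually P (filtercomap \<Lambda> (nhds L))" "eventually R F"
        "\<And>k. P k \<Longrightarrow> R k \<Longrightarrow> False"
      unfolding U_def trivial_limit_def eventually_inf by blast
    then obtain P' where P': "eventually P' (nhds L)" "eventually (\<lambda>k. \<not> P' (\<Lambda> k)) F"
      unfolding eventually_filtercomap by (metis (mono_tags) eventually_mono)
    have "eventually (\<lambda>_. False) (inf (nhds L) (filtermap \<Lambda> F))"
      unfolding eventually_inf eventually_filtermap
    proof (intro exI conjI)
      show "eventually P' (nhds L)" "eventually (\<lambda>k. \<not> P' (\<Lambda> k)) F" by (fact P')+
    qed auto
    with L show False by (simp add: trivial_limit_def)
  qed
  moreover have "((\<lambda>k. \<Lambda> k i) \<longlongrightarrow> L i) U" for i
  proof -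
    have "filterlim \<Lambda> (nhds L) U" by (simp add: U_def filterlim_iff_le_filtercomap)
    from continuous_on_tendsto_compose[OF continuous_on_product_coordinates this] show ?thesis
      by simp
  qed
  ultimately show ?thesis using that[of U L] by (simp add: U_def)
qed

lemma bounded_ops_weak_cluster_point:
  fixes T :: "'k \<Rightarrow> 'a::complex_hilbert \<Rightarrow> 'a"
  assumes F: "F \<noteq> bot" and bT: "\<And>k. bop (T k)"
    and bound: "\<And>k x y. cmod (cinner x (T k y)) \<le> M * norm x * norm y" and "0 \<le> M"
  obtains U Q where "U \<noteq> bot" "U \<le> F" "bop Q" "\<And>x y. ((\<lambda>k. cinner x (T k y)) \<longlongrightarrow> cinner x (Q y)) U"
proof -
  have "norm ((\<lambda>(x, y). cinner x (T k y)) i) \<le> (\<lambda>(x, y). M * norm x * norm y) i" for k i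
    by (cases i) (simp add: bound)
  then obtain U L where U: "U \<noteq> bot" "U \<le> F"
    and lim: "\<And>i. ((\<lambda>k. (\<lambda>(x, y). cinner x (T k y)) i) \<longlongrightarrow> L i) U"
    using bounded_family_convergent_refinement[OF F] by metis
  define B where "B x y = L (x, y)" for x y
  have lim: "((\<lambda>k. cinner x (T k y)) \<longlongrightarrow> B x y) U" for x y
    using lim[of "(x, y)"] by (simp add: B_def)
  have "\<exists>Q. bop Q \<and> (\<forall>x y. B x y = cinner x (Q y))"
  proof (rule bounded_sesquilinear_representation)
    show "B (x + x') y = B x y + B x' y" for x x' y
      by (rule tendsto_unique[OF U(1) lim]) (simp add: cinner_add_left tendsto_add[OF lim lim])
    show "B x (y + y') = B x y + B x y'" for x y y'
      by (rule tendsto_unique[OF U(1) lim])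
         (simp add: bop_apply_add[OF bT] cinner_add_right tendsto_add[OF lim lim])
    show "B (cscale c x) y = cnj c * B x y" for c x y
      by (rule tendsto_unique[OF U(1) lim]) (simp add: cinner_cscale_left tendsto_mult_left[OF lim])
    show "B x (cscale c y) = c * B x y" for c x y
      by (rule tendsto_unique[OF U(1) lim])
         (simp add: bop_apply_cscale[OF bT] cinner_cscale_right tendsto_mult_left[OF lim])
    show "cmod (B x y) \<le> M * norm x * norm y" for x y
      by (rule tendsto_upperbound[OF tendsto_norm[OF lim] _ U(1)]) (simp add: bound)
  qed fact
  then show ?thesis using that U lim by metis
qed

lemma op_le_scal_weak_limit:
  assumes U: "U \<noteq> bot" and lim: "\<And>x y. ((\<lambda>k. cinner x (T k y)) \<longlongrightarrow> cinner x (Q y)) U"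
    and ev: "\<forall>\<^sub>F k in U. op_le (op_scal a) (T k) \<and> op_le (T k) (op_scal b)"
  shows "op_le (op_scal a) Q" "op_le Q (op_scal b)"
proof -
  have re: "((\<lambda>k. inner x (T k x)) \<longlongrightarrow> inner x (Q x)) U"
    and im: "((\<lambda>k. inner (cJ x) (T k x)) \<longlongrightarrow> inner (cJ x) (Q x)) U" for x
    using tendsto_Re[OF lim[of x x]] tendsto_Im[OF lim[of x x]] by simp_all
  have "a * (norm x)\<^sup>2 \<le> inner x (Q x)" "inner x (Q x) \<le> b * (norm x)\<^sup>2" for x
    using ev by (auto intro!: tendsto_lowerbound[OF re _ U] tendsto_upperbound[OF re _ U]
        elim!: eventually_mono simp: op_le_scal_left op_le_scal_right)
  moreover have "inner (cJ x) (Q x) = 0" for x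
  proof -
    have "\<forall>\<^sub>F k in U. inner (cJ x) (T k x) = 0"
      using ev by (auto elim: eventually_mono simp: op_le_scal_left)
    then show ?thesis
      using tendsto_unique[OF U im tendsto_eventually] by blast
  qed
  ultimately show "op_le (op_scal a) Q" "op_le Q (op_scal b)"
    by (simp_all add: op_le_scal_left op_le_scal_right)
qed

lemma cinner_polarization:
  assumes "bop Z"
  shows "cinner x (Z y) = (cinner (x + y) (Z (x + y)) - cinner (x - y) (Z (x - y))
     - \<i> * cinner (x + cJ y) (Z (x + cJ y)) + \<i> * cinner (x - cJ y) (Z (x - cJ y))) / 4"
  by (simp add: bop_apply_add[OF assms] bop_apply_diff[OF assms] bop_apply_cJ[OF assms]
      cinner_add_left cinner_add_right cinner_diff_left cinner_diff_right cinner_cJ_left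
      cinner_cJ_right algebra_simps)

lemma cesaro_orbit_diagonal_tendsto_zero:
  assumes lin: "linear_map \<phi>" "positive_map \<phi>" and P: "positive_op P"
    and bound: "\<And>k. k \<ge> 1 \<Longrightarrow> op_le (cesaro \<phi> k P) (op_scal b)"
  shows "((\<lambda>k. of_real (1 / real k) * cinner u ((\<phi> ^^ k) P u)) \<longlongrightarrow> 0) density_filter"
proof -
  define s where "s k = inner u ((\<phi> ^^ k) P u)" for k
  have pos: "positive_op ((\<phi> ^^ k) P)" for k
    using lin P by (rule positive_map_funpow_positive_op)
  then have "0 \<le> s k" for k by (simp add: s_def positive_op_iff)
  moreover have "(\<Sum>k<K. s k) \<le> (b * (norm u)\<^sup>2) * real K" for K
  proof (cases "K = 0")
    case False
    have "(\<Sum>k<K. s k) = real K * inner u (cesaro \<phi> K P u)"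
      using False by (simp add: cesaro_def inner_sum_right s_def)
    also have "\<dots> \<le> real K * (b * (norm u)\<^sup>2)"
      using bound[of K] False by (intro mult_left_mono) (auto simp: op_le_scal_right)
    finally show ?thesis by (simp add: mult_ac)
  qed simp
  ultimately have "((\<lambda>k. s k / real k) \<longlongrightarrow> 0) density_filter"
    by (rule tendsto_density_filter_if_bounded_averages)
  then have "((\<lambda>k. complex_of_real (s k / real k)) \<longlongrightarrow> 0) density_filter"
    by (metis of_real_0 tendsto_of_real)
  moreover have "(\<lambda>k. of_real (1 / real k) * cinner u ((\<phi> ^^ k) P u)) =
      (\<lambda>k. complex_of_real (s k / real k))"
    using pos by (simp add: fun_eq_iff complex_eq_iff s_def positive_op_iff)
  ultimately show ?thesis by simp
qed

lemma cesaro_defect_tendsto_zero: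
  assumes lin: "linear_map \<phi>" "positive_map \<phi>" and P: "positive_op P"
    and bound: "\<And>k. k \<ge> 1 \<Longrightarrow> op_le (cesaro \<phi> k P) (op_scal b)"
  shows "((\<lambda>k. cinner x (\<phi> (cesaro \<phi> k P) y) - cinner x (cesaro \<phi> k P y)) \<longlongrightarrow> 0) density_filter"
proof -
  note diag = cesaro_orbit_diagonal_tendsto_zero[OF lin P bound]
  have "((\<lambda>k. of_real (1 / real k) * cinner x ((\<phi> ^^ k) P y)) \<longlongrightarrow> 0) density_filter"
    using tendsto_add[OF tendsto_diff[OF diag[of "x + y"] diag[of "x - y"]]
        tendsto_diff[OF tendsto_mult_right_zero[OF diag[of "x - cJ y"], of \<i>]
          tendsto_mult_right_zero[OF diag[of "x + cJ y"], of \<i>]]]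
    by (simp add: cinner_polarization[OF linear_map_funpow_bop[OF lin(1) positive_op_bop[OF P]],
          of x] algebra_simps tendsto_divide_zero)
  moreover have "((\<lambda>k. 1 / of_nat k * cinner x (P y)) \<longlongrightarrow> 0) density_filter"
    using density_filter_le_sequentially
    by (rule tendsto_mono) (intro tendsto_mult_left_zero lim_1_over_n)
  ultimately show ?thesis
    using positive_op_bop[OF P]
    by (simp add: cesaro_step[OF lin(1)] cinner_add_right cinner_scaleR_right cinner_diff_right
        algebra_simps tendsto_diff[where b=0, simplified])
qed

lemma weak_limit_of_almost_invariant:
  assumes lin: "linear_map \<phi>" and cont: "continuous_map wstar_top wstar_top \<phi>"
    and U: "U \<noteq> bot" and bT: "\<And>k. bop (T k)" and bQ: "bop Q"
    and bound: "\<And>k x y. cmod (cinner x (T k y)) \<le> M * norm x * norm y"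
    and lim: "\<And>x y. ((\<lambda>k. cinner x (T k y)) \<longlongrightarrow> cinner x (Q y)) U"
    and defect: "\<And>x y. ((\<lambda>k. cinner x (\<phi> (T k) y) - cinner x (T k y)) \<longlongrightarrow> 0) U"
  shows "\<phi> Q = Q"
proof -
  have "limitin wstar_top T Q U"
  proof (rule limitin_wstar_topI)
    show "Q \<in> BH" "\<forall>\<^sub>F k in U. T k \<in> BH" using bQ bT by (simp_all add: BH_iff)
    show "((\<lambda>k. sw_functional xs ys (T k)) \<longlongrightarrow> sw_functional xs ys Q) U"
      if "square_summable xs" "square_summable ys" for xs ys
      using that bound lim U by (rule sw_functional_tendsto)
  qed
  then have "limitin wstar_top (\<lambda>k. \<phi> (T k)) (\<phi> Q) U"
    using continuous_map_limit[OF cont] by (simp add: comp_def)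
  then have "((\<lambda>k. cinner x (\<phi> (T k) y)) \<longlongrightarrow> cinner x (\<phi> Q y)) U" for x y
    using linear_map_bop[OF lin bT] by (rule limitin_wstar_top_cinner)
  moreover have "((\<lambda>k. cinner x (\<phi> (T k) y)) \<longlongrightarrow> cinner x (Q y)) U" for x y
    using tendsto_add[OF defect[of x y] lim[of x y]] by simp
  ultimately have "cinner x (\<phi> Q y) = cinner x (Q y)" for x y
    using tendsto_unique[OF U] by blast
  then show "\<phi> Q = Q" by (intro ext cinner_ext) blast
qed

lemma cesaro_bounded_imp_invariant:
  fixes \<phi> :: "('a::complex_hilbert \<Rightarrow> 'a) \<Rightarrow> ('a \<Rightarrow> 'a)"
  assumes wpl: "wstar_pos_linear \<phi>" and ab: "0 < a" "a \<le> b" and P: "positive_op P"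
    and bounds: "\<forall>k\<ge>1. op_le (op_scal a) (cesaro \<phi> k P) \<and> op_le (cesaro \<phi> k P) (op_scal b)"
  shows "\<exists>Q. invertible_op Q \<and> positive_op Q \<and> \<phi> Q = Q \<and> op_le (op_scal a) Q \<and> op_le Q (op_scal b)"
proof -
  have lin: "linear_map \<phi>" "positive_map \<phi>" and cont: "continuous_map wstar_top wstar_top \<phi>"
    using wpl by (auto simp: wstar_pos_linear_def wstar_continuous_def)
  have b0: "0 \<le> b" using ab by simp
  define T where "T k = cesaro \<phi> k P" for k
  have bT: "bop (T k)" for k
    unfolding T_def using lin(1) positive_op_bop[OF P] by (rule bop_cesaro)
  have Ta: "op_le (op_scal a) (T k)" and Tb: "op_le (T k) (op_scal b)" if "k \<ge> 1" for k
    using bounds that by (simp_all add: T_def)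
  have bound: "cmod (cinner x (T k y)) \<le> b * norm x * norm y" for k x y
  proof (cases "k = 0")
    case False
    then have "positive_op (T k)"
      using bT ab(1) Ta by (intro positive_op_if_op_le_scal[of _ a]) auto
    then show ?thesis
      using Tb False b0 by (intro positive_op_cinner_le) auto
  qed (simp add: T_def b0)
  \<comment> \<open>a weak cluster point along the density filter, where the Cesaro defect vanishes\<close>
  obtain U Q where U: "U \<noteq> bot" "U \<le> density_filter" and bQ: "bop Q"
    and lim: "\<And>x y. ((\<lambda>k. cinner x (T k y)) \<longlongrightarrow> cinner x (Q y)) U"
    by (rule bounded_ops_weak_cluster_point[OF density_filter_ne_bot bT bound b0]) (rule that)
  have "\<forall>\<^sub>F k in U. k \<ge> 1"
    using order.trans[OF U(2) density_filter_le_sequentially]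
    by (rule filter_leD) (auto simp: eventually_sequentially)
  then have "\<forall>\<^sub>F k in U. op_le (op_scal a) (T k) \<and> op_le (T k) (op_scal b)"
    by (rule eventually_mono) (simp add: Ta Tb)
  then have Qa: "op_le (op_scal a) Q" and Qb: "op_le Q (op_scal b)"
    using op_le_scal_weak_limit[where T=T and Q=Q, OF U(1) lim] by blast+
  have Qpos: "positive_op Q"
    using bQ ab(1) Qa by (intro positive_op_if_op_le_scal[of _ a]) auto
  have "((\<lambda>k. cinner x (\<phi> (T k) y) - cinner x (T k y)) \<longlongrightarrow> 0) U" for x y
    using tendsto_mono[OF U(2) cesaro_defect_tendsto_zero[OF lin P Tb[unfolded T_def]]]
    by (simp add: T_def)
  then have "\<phi> Q = Q"
    using weak_limit_of_almost_invariant[OF lin(1) cont U(1) bT bQ bound lim] by blast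
  then show ?thesis
    using Qpos Qa Qb positive_op_invertible[OF Qpos ab(1) Qa] by blast
qed

section \<open>Similarity and bounded orbits\<close>

lemma sandwich_cscale_add:
  assumes "bop A"
  shows "A \<circ> (\<lambda>x. cscale c (X x) + Y x) \<circ> B = (\<lambda>x. cscale c ((A \<circ> X \<circ> B) x) + (A \<circ> Y \<circ> B) x)"
  by (simp add: fun_eq_iff bop_apply_add[OF assms] bop_apply_cscale[OF assms])

lemma wstar_pos_linear_congruence:
  assumes "wstar_pos_linear \<phi>" "bop A" "bop B"
  shows "wstar_pos_linear (\<lambda>X. A \<circ> \<phi> (B \<circ> X \<circ> adjoint B) \<circ> adjoint A)"
proof -
  have lin: "linear_map \<phi>" "positive_map \<phi>" and cont: "continuous_map wstar_top wstar_top \<phi>"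
    using assms(1) by (auto simp: wstar_pos_linear_def wstar_continuous_def)
  have bB: "bop (B \<circ> X \<circ> adjoint B)" if "bop X" for X
    using that assms(3) by (intro bop_comp adjoint_bop)
  have "linear_map (\<lambda>X. A \<circ> \<phi> (B \<circ> X \<circ> adjoint B) \<circ> adjoint A)"
    unfolding linear_map_def
  proof (intro conjI ballI allI)
    show "A \<circ> \<phi> (B \<circ> X \<circ> adjoint B) \<circ> adjoint A \<in> BH" if "X \<in> BH" for X
      using that assms(2) unfolding BH_iff
      by (intro bop_comp adjoint_bop linear_map_bop[OF lin(1)] bB)
    show "A \<circ> \<phi> (B \<circ> (\<lambda>x. cscale c (X x) + Y x) \<circ> adjoint B) \<circ> adjoint A =
        (\<lambda>x. cscale c ((A \<circ> \<phi> (B \<circ> X \<circ> adjoint B) \<circ> adjoint A) x) +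
          (A \<circ> \<phi> (B \<circ> Y \<circ> adjoint B) \<circ> adjoint A) x)" if "X \<in> BH" "Y \<in> BH" for X Y c
      using that unfolding BH_iff sandwich_cscale_add[OF assms(3)]
      by (simp only: linear_map_cscale_add[OF lin(1) bB bB] sandwich_cscale_add[OF assms(2)])
  qed
  moreover have "positive_map (\<lambda>X. A \<circ> \<phi> (B \<circ> X \<circ> adjoint B) \<circ> adjoint A)"
    unfolding positive_map_def
    using assms(2,3) positive_map_positive_op[OF lin(2)] by (simp add: sandwich_positive_op)
  moreover have "continuous_map wstar_top wstar_top (\<lambda>X. A \<circ> \<phi> (B \<circ> X \<circ> adjoint B) \<circ> adjoint A)"
    using continuous_map_compose[OF continuous_map_compose[OF
          continuous_map_sandwich[OF assms(3) adjoint_bop[OF assms(3)]] cont]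
          continuous_map_sandwich[OF assms(2) adjoint_bop[OF assms(2)]]]
    by (simp add: comp_def)
  ultimately show ?thesis
    by (simp add: wstar_pos_linear_def wstar_continuous_def)
qed

lemma similar_congruence:
  assumes R: "bop R" "bop S" "\<And>x. S (R x) = x" "\<And>x. R (S x) = x"
  shows "similar \<phi> (\<lambda>X. S \<circ> \<phi> (R \<circ> X \<circ> adjoint R) \<circ> adjoint S)"
proof -
  have "R \<circ> (S \<circ> Y \<circ> adjoint S) \<circ> adjoint R = Y" for Y
    using R adjoint_inverse[OF R(1,2)] by (simp add: fun_eq_iff)
  then show ?thesis
    using invertible_opI[OF R] by (auto simp: similar_def)
qed

lemma similar_unital_imp_invariant:
  assumes "similar \<phi> \<mu>" "\<mu> op_id = op_id"
  shows "\<exists>Q. invertible_op Q \<and> positive_op Q \<and> \<phi> Q = Q"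
proof -
  obtain R where R: "invertible_op R" and sim: "\<forall>X\<in>BH. \<phi> (R \<circ> X \<circ> adjoint R) = R \<circ> \<mu> X \<circ> adjoint R"
    using assms(1) by (auto simp: similar_def)
  have "op_id \<in> BH" by (simp add: BH_iff op_id_eq_id bop_id)
  from sim[rule_format, OF this] have "\<phi> (R \<circ> op_id \<circ> adjoint R) = R \<circ> op_id \<circ> adjoint R"
    using assms(2) by simp
  moreover have "invertible_op (R \<circ> op_id \<circ> adjoint R)"
    using R by (simp add: op_id_eq_id invertible_op_comp invertible_op_adjoint)
  moreover have "positive_op (R \<circ> op_id \<circ> adjoint R)"
    using R positive_op_id by (intro sandwich_positive_op invertible_op_bop)
  ultimately show ?thesis by blast
qed

lemma invariant_imp_similar_unital:
  assumes wpl: "wstar_pos_linear \<phi>" and Q: "invertible_op Q" "positive_op Q" "\<phi> Q = Q"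
  shows "\<exists>\<mu>. wstar_pos_linear \<mu> \<and> \<mu> op_id = op_id \<and> similar \<phi> \<mu>"
proof -
  obtain c where c: "0 < c" "op_le (op_scal c) Q"
    using invertible_positive_op_bounded_below[OF Q(2,1)] by blast
  obtain R where R: "invertible_op R" "adjoint R = R" "R \<circ> R = Q"
    by (rule positive_op_sqrt[OF Q(2) c])
  obtain S where S: "bop S" "\<And>x. S (R x) = x" "\<And>x. R (S x) = x"
    using R(1) by (elim invertible_opE) (rule that)
  have bR: "bop R" using R(1) by (rule invertible_op_bop)
  define \<mu> where "\<mu> X = S \<circ> \<phi> (R \<circ> X \<circ> adjoint R) \<circ> adjoint S" for X
  have RQ: "R \<circ> op_id \<circ> adjoint R = Q" using R(2,3) by (simp add: op_id_eq_id)
  have "\<mu> op_id x = x" for x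
  proof -
    have "\<mu> op_id x = S (Q (adjoint S x))" by (simp add: \<mu>_def RQ Q(3))
    also have "\<dots> = S (R (R (adjoint S x)))" by (simp flip: R(3))
    also have "\<dots> = adjoint R (adjoint S x)" using S(2) R(2) by simp
    finally show ?thesis using adjoint_inverse[OF S(1) bR S(2)] by simp
  qed
  then have "\<mu> op_id = op_id" by (simp add: fun_eq_iff op_id_def)
  moreover have "wstar_pos_linear \<mu>"
    unfolding \<mu>_def[abs_def] using wpl S(1) bR by (rule wstar_pos_linear_congruence)
  moreover have "similar \<phi> \<mu>"
    unfolding \<mu>_def[abs_def] using bR S by (rule similar_congruence)
  ultimately show ?thesis by blast
qed

lemma funpow_fixed: "f x = x \<Longrightarrow> (f ^^ n) x = x"
  by (induction n) auto

lemma invariant_imp_orbit_bounds: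
  assumes "invertible_op Q" "positive_op Q" "\<phi> Q = Q"
  shows "\<exists>c d. 0 < c \<and> c \<le> d \<and>
    (\<forall>k. op_le (op_scal c) ((\<phi> ^^ k) Q) \<and> op_le ((\<phi> ^^ k) Q) (op_scal d))"
proof -
  obtain c where c: "0 < c" "op_le (op_scal c) Q"
    using invertible_positive_op_bounded_below[OF assms(2,1)] by blast
  moreover obtain d where "c \<le> d" "op_le Q (op_scal d)"
    using assms(2) by (rule positive_op_bounded_above)
  ultimately show ?thesis
    using funpow_fixed[of \<phi> Q, OF assms(3)] by auto
qed

lemma op_le_op_scal_scaleR_iff:
  assumes "0 < r"
  shows "op_le (\<lambda>x. r *\<^sub>R X x) (op_scal d) \<longleftrightarrow> op_le X (op_scal (d / r))"
    and "op_le (op_scal c) (\<lambda>x. r *\<^sub>R X x) \<longleftrightarrow> op_le (op_scal (c / r)) X"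
  using assms by (auto simp: op_le_scal_left op_le_scal_right field_simps)

lemma orbit_bounds_transfer:
  assumes lin: "linear_map \<phi>" "positive_map \<phi>" and R: "invertible_op R" "positive_op R"
    and cd: "0 < c" "c \<le> d"
    and bounds: "\<forall>k\<ge>1. op_le (op_scal c) ((\<phi> ^^ k) R) \<and> op_le ((\<phi> ^^ k) R) (op_scal d)"
  shows "\<exists>c d. 0 < c \<and> c \<le> d \<and> (\<forall>k\<ge>1.
    op_le (op_scal c) ((\<phi> ^^ k) op_id) \<and> op_le ((\<phi> ^^ k) op_id) (op_scal d))"
proof -
  \<comment> \<open>cR I \<le> R \<le> dR I is preserved by the positive maps \<phi>^k\<close>
  obtain cR where cR: "0 < cR" "op_le (op_scal cR) R"
    using invertible_positive_op_bounded_below[OF R(2,1)] by blast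
  obtain dR where dR: "cR \<le> dR" "op_le R (op_scal dR)"
    using R(2) by (rule positive_op_bounded_above)
  have bR: "bop R" using R(1) by (rule invertible_op_bop)
  have scal: "(\<phi> ^^ k) (op_scal r) = (\<lambda>x. r *\<^sub>R (\<phi> ^^ k) op_id x)" for r k
    using linear_map_funpow_scaleR[OF lin(1) bop_ident, of k r]
    by (simp add: op_scal_def op_id_def)
  have "op_le ((\<phi> ^^ k) (op_scal cR)) ((\<phi> ^^ k) R)"
    "op_le ((\<phi> ^^ k) R) ((\<phi> ^^ k) (op_scal dR))" for k
    using cR dR bR by (auto intro!: positive_map_funpow_mono[OF lin] bop_op_scal)
  then have "op_le (\<lambda>x. cR *\<^sub>R (\<phi> ^^ k) op_id x) (op_scal d)"
    "op_le (op_scal c) (\<lambda>x. dR *\<^sub>R (\<phi> ^^ k) op_id x)" if "k \<ge> 1" for k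
    using bounds that op_le_trans unfolding scal by blast+
  then have "op_le (op_scal (c / dR)) ((\<phi> ^^ k) op_id) \<and> op_le ((\<phi> ^^ k) op_id) (op_scal (d / cR))"
    if "k \<ge> 1" for k
    using that cR(1) dR(1) by (simp add: op_le_op_scal_scaleR_iff)
  moreover have "c / dR \<le> d / cR"
    using cd cR dR by (simp add: frac_le)
  moreover have "0 < c / dR" using cd cR dR by simp
  ultimately show ?thesis by blast
qed

lemma orbit_bounds_imp_cesaro_bounds:
  assumes "0 < c" "c \<le> d"
    and bounds: "\<forall>k\<ge>1. op_le (op_scal c) ((\<phi> ^^ k) op_id) \<and> op_le ((\<phi> ^^ k) op_id) (op_scal d)"
  shows "\<exists>a b. 0 < a \<and> a \<le> b \<and> (\<forall>k\<ge>1.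
    op_le (op_scal a) (cesaro \<phi> k op_id) \<and> op_le (cesaro \<phi> k op_id) (op_scal b))"
proof -
  \<comment> \<open>widen the bounds so that they also cover \<phi>^0 I = I\<close>
  have "op_le (op_scal (min c 1)) ((\<phi> ^^ j) op_id) \<and>
      op_le ((\<phi> ^^ j) op_id) (op_scal (max d 1))" for j
  proof (cases "j = 0")
    case True then show ?thesis by (simp add: op_id_eq_op_scal op_le_scal_mono)
  next
    case False
    then have "op_le (op_scal c) ((\<phi> ^^ j) op_id) \<and> op_le ((\<phi> ^^ j) op_id) (op_scal d)"
      using bounds by simp
    then show ?thesis
      using op_le_trans[OF op_le_scal_mono[of "min c 1" c]]
        op_le_trans[OF _ op_le_scal_mono[of d "max d 1"]]
      by auto
  qed
  then have "\<forall>k\<ge>1. op_le (op_scal (min c 1)) (cesaro \<phi> k op_id) \<and>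
      op_le (cesaro \<phi> k op_id) (op_scal (max d 1))"
    using cesaro_op_le_bounds by blast
  moreover have "0 < min c 1" "min c 1 \<le> max d 1" using assms(1,2) by auto
  ultimately show ?thesis by blast
qed

theorem theorem5p1:
  fixes \<phi> :: "('h::complex_hilbert \<Rightarrow> 'h) \<Rightarrow> ('h \<Rightarrow> 'h)"
  assumes "wstar_pos_linear \<phi>"
  defines "C1 \<equiv> \<exists>\<mu>. wstar_pos_linear \<mu> \<and> \<mu> op_id = op_id \<and> similar \<phi> \<mu>"
    and "C2 \<equiv> \<exists>a b. 0 < a \<and> a \<le> b \<and> (\<forall>k\<ge>1.
            op_le (op_scal a) (cesaro \<phi> k op_id) \<and> op_le (cesaro \<phi> k op_id) (op_scal b))"
    and "C3 \<equiv> \<exists>a b P. 0 < a \<and> a \<le> b \<and> invertible_op P \<and> positive_op P \<and> (\<forall>k\<ge>1.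
            op_le (op_scal a) (cesaro \<phi> k P) \<and> op_le (cesaro \<phi> k P) (op_scal b))"
    and "C4 \<equiv> \<exists>c d. 0 < c \<and> c \<le> d \<and> (\<forall>k\<ge>1.
            op_le (op_scal c) ((\<phi> ^^ k) op_id) \<and> op_le ((\<phi> ^^ k) op_id) (op_scal d))"
    and "C5 \<equiv> \<exists>c d R. 0 < c \<and> c \<le> d \<and> invertible_op R \<and> positive_op R \<and> (\<forall>k\<ge>1.
            op_le (op_scal c) ((\<phi> ^^ k) R) \<and> op_le ((\<phi> ^^ k) R) (op_scal d))"
    and "C6 \<equiv> \<exists>Q. invertible_op Q \<and> positive_op Q \<and> \<phi> Q = Q"
  shows "(C1 \<longleftrightarrow> C2) \<and> (C2 \<longleftrightarrow> C3) \<and> (C3 \<longleftrightarrow> C4) \<and> (C4 \<longleftrightarrow> C5) \<and> (C5 \<longleftrightarrow> C6)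
    \<and> (\<forall>a b P. 0 < a \<and> a \<le> b \<and> invertible_op P \<and> positive_op P \<and> (\<forall>k\<ge>1.
            op_le (op_scal a) (cesaro \<phi> k P) \<and> op_le (cesaro \<phi> k P) (op_scal b))
         \<longrightarrow> (\<exists>Q. invertible_op Q \<and> positive_op Q \<and> \<phi> Q = Q
                  \<and> op_le (op_scal a) Q \<and> op_le Q (op_scal b)))"
proof -
  have lin: "linear_map \<phi>" "positive_map \<phi>"
    using assms(1) by (simp_all add: wstar_pos_linear_def)
  have invariant: "\<forall>a b P. 0 < a \<and> a \<le> b \<and> invertible_op P \<and> positive_op P \<and> (\<forall>k\<ge>1.
      op_le (op_scal a) (cesaro \<phi> k P) \<and> op_le (cesaro \<phi> k P) (op_scal b))
    \<longrightarrow> (\<exists>Q. invertible_op Q \<and> positive_op Q \<and> \<phi> Q = Q \<and> op_le (op_scal a) Q \<and> op_le Q (op_scal b))"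
    using cesaro_bounded_imp_invariant[OF assms(1)] by blast
  have "C1 \<Longrightarrow> C6" unfolding C1_def C6_def using similar_unital_imp_invariant by blast
  moreover have "C6 \<Longrightarrow> C5" unfolding C6_def C5_def using invariant_imp_orbit_bounds by blast
  moreover have "C5 \<Longrightarrow> C4" unfolding C5_def C4_def using orbit_bounds_transfer[OF lin] by blast
  moreover have "C4 \<Longrightarrow> C2" unfolding C4_def C2_def using orbit_bounds_imp_cesaro_bounds by blast
  moreover have "C2 \<Longrightarrow> C3" unfolding C2_def C3_def using invertible_op_id positive_op_id by blast
  moreover have "C3 \<Longrightarrow> C6" unfolding C3_def C6_def using invariant by blast
  moreover have "C6 \<Longrightarrow> C1"
    unfolding C6_def C1_def using invariant_imp_similar_unital[OF assms(1)] by blast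
  ultimately show ?thesis using invariant by blast
qed


end
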